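(* Let $\Phi(z)\in K(z)$ have degree $d\ge1$; put $B_0=B_0(\Phi)$ and $c_0=\Phi(0)$. Assume $\Phi$ has no poles in $D(0,B_0)^-$, so that $\Phi(D(0,B_0)^-)=D(c_0,R)^-$ for some $R>0$. Suppose $|c_0|\le1$ and $R\le1$. Then $\mathrm{Lip}_{\mathrm{Berk}}(\Phi|_{[0,\zeta_{0,B_0}]})\le d/B_0$.
   Context: $K$ is a complete, algebraically closed field with a nontrivial nonarchimedean absolute value. $D(a,r)^-=\{z\in K:|z-a|<r\}$. Fix $q>1$. $\mathbf P^1_{\mathrm{Berk}}$ is the Berkovich projective line over $K$ (tree containing $\mathbf P^1(K)$); $\zeta_{a,r}$ is the point of the disc $D(a,r)=\{|z-a|\le r\}$, $\zeta_{a,0}=a$, $\zeta_G=\zeta_{0,1}$; $[x,y]$ unique path, $(x,y]$ half-open. $\rho$ is the logarithmic path metric on $\mathbf H^1=\mathbf P^1_{\mathrm{Berk}}\setminus\mathbf P^1(K)$ (path $\{\zeta_{a,r}:R_1\le r\le R_2\}$ has length $\log_q(R_2/R_1)$); $\mathrm{diam}_G(x)=q^{-\rho(\zeta_G,x)}$ on $\mathbf H^1$, $0$ on $\mathbf P^1(K)$. $x\vee_G y$ first common point of $[x,\zeta_G],[y,\zeta_G]$; $d(x,y)=2\mathrm{diam}_G(x\vee_G y)-\mathrm{diam}_G(x)-\mathrm{diam}_G(y)$. For $S\subseteq\mathbf P^1_{\mathrm{Berk}}$, $\mathrm{Lip}_{\mathrm{Berk}}(\Phi|_S)=\sup_{x\ne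 y\in S}d(\Phi x,\Phi y)/d(x,y)$. For $a\in\mathbf P^1(K)$, $0<r<1$, $Q_{a,r}$ is the point of $[a,\zeta_G]$ with $\mathrm{diam}_G=r$, $\mathcal B(a,r)^-=\{x:Q_{a,r}\in(x,\zeta_G]\}$, $\mathcal B(a,1)^-=\bigcup_{r<1}\mathcal B(a,r)^-$; $B_0(\Phi)=\sup\{0<r\le1:\Phi(\mathcal B(a,r)^-)\ne\mathbf P^1_{\mathrm{Berk}}\ \forall a\in\mathbf P^1(K)\}$. *)

theory Defs
  imports "HOL-Computational_Algebra.Polynomial" "HOL-Library.Extended_Real"
begin

definition nonarch_cac_field :: "('a::field \<Rightarrow> real) \<Rightarrow> bool" where
  "nonarch_cac_field absv \<longleftrightarrow>
     (\<forall>x. absv x \<ge> 0) \<and> (\<forall>x. absv x = 0 \<longleftrightarrow> x = 0) \<and>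
     (\<forall>x y. absv (x * y) = absv x * absv y) \<and>
     (\<forall>x y. absv (x + y) \<le> max (absv x) (absv y)) \<and>
     (\<exists>x. absv x \<noteq> 0 \<and> absv x \<noteq> 1) \<and>
     (\<forall>s :: nat \<Rightarrow> 'a. (\<forall>e>0. \<exists>N. \<forall>m\<ge>N. \<forall>n\<ge>N. absv (s m - s n) < e) \<longrightarrow>
          (\<exists>l. \<forall>e>0. \<exists>N. \<forall>n\<ge>N. absv (s n - l) < e)) \<and>
     (\<forall>p :: 'a poly. degree p \<ge> 1 \<longrightarrow> (\<exists>z. poly p z = 0))"

text \<open>A point of the Berkovich affine line is a multiplicative seminorm on K[T]
  extending absv; the Berkovich projective line adds the point infinity (None).\<close>

type_synonym 'a bsn = "'a poly \<Rightarrow> real"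
type_synonym 'a berk = "'a bsn option"

definition is_berk_aff :: "('a::field \<Rightarrow> real) \<Rightarrow> 'a bsn \<Rightarrow> bool" where
  "is_berk_aff absv N \<longleftrightarrow>
     (\<forall>f. N f \<ge> 0) \<and> (\<forall>f g. N (f * g) = N f * N g) \<and>
     (\<forall>f g. N (f + g) \<le> N f + N g) \<and> (\<forall>c. N [:c:] = absv c)"

definition Berk :: "('a::field \<Rightarrow> real) \<Rightarrow> 'a berk set" where
  "Berk absv = insert None (Some ` {N. is_berk_aff absv N})"

definition typeI :: "('a::field \<Rightarrow> real) \<Rightarrow> 'a \<Rightarrow> 'a bsn" where
  "typeI absv a = (\<lambda>f. absv (poly f a))"

definition P1K :: "('a::field \<Rightarrow> real) \<Rightarrow> 'a berk set" where
  "P1K absv = insert None (range (\<lambda>a. Some (typeI absv a)))"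

text \<open>zeta_{a,r}: sup norm on the disc D(a,r); zeta_{a,0} = a.\<close>
definition zeta :: "('a::field \<Rightarrow> real) \<Rightarrow> 'a \<Rightarrow> real \<Rightarrow> 'a bsn" where
  "zeta absv a r = (\<lambda>f. Max ((\<lambda>i. absv (coeff (pcompose f [:a, 1:]) i) * r ^ i) ` {..degree f}))"

definition zetaG :: "('a::field \<Rightarrow> real) \<Rightarrow> 'a berk" where
  "zetaG absv = Some (zeta absv 0 1)"

definition inv_poly :: "'a::field poly \<Rightarrow> 'a poly" where
  "inv_poly f = (\<Sum>i\<le>degree f. monom (coeff f i) (degree f - i))"

definition berk_inv :: "('a::field \<Rightarrow> real) \<Rightarrow> 'a berk \<Rightarrow> 'a berk" where
  "berk_inv absv x = (case x of None \<Rightarrow> Some (typeI absv 0)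
     | Some N \<Rightarrow> if N [:0, 1:] = 0 then None
                 else Some (\<lambda>f. N (inv_poly f) / N [:0, 1:] ^ degree f))"

definition in_cdisc :: "'a::field berk \<Rightarrow> bool" where
  "in_cdisc x \<longleftrightarrow> (\<exists>N. x = Some N \<and> N [:0, 1:] \<le> 1)"

definition berk_le :: "'a::field berk \<Rightarrow> 'a berk \<Rightarrow> bool" where
  "berk_le x y \<longleftrightarrow> (\<exists>N M. x = Some N \<and> y = Some M \<and> (\<forall>f. N f \<le> M f))"

text \<open>on_path_G absv x y  <->  y lies on the path [x, zeta_G].  Inside the closed unit
  Berkovich disc this is the usual (pointwise) order of seminorms; outside it, one
  uses the coordinate 1/z.\<close>
definition on_path_G :: "('a::field \<Rightarrow> real) \<Rightarrow> 'a berk \<Rightarrow> 'a berk \<Rightarrow> bool" where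
  "on_path_G absv x y \<longleftrightarrow>
     (if in_cdisc x then in_cdisc y \<and> berk_le x y
      else in_cdisc (berk_inv absv y) \<and> berk_le (berk_inv absv x) (berk_inv absv y))"

definition rad :: "'a::field bsn \<Rightarrow> real" where
  "rad N = (INF a. N [:-a, 1:])"

text \<open>diam_G(x) = q^(-rho(zeta_G,x)) (independent of q).\<close>
definition diamG :: "('a::field \<Rightarrow> real) \<Rightarrow> 'a berk \<Rightarrow> real" where
  "diamG absv x = (case x of None \<Rightarrow> 0
     | Some N \<Rightarrow> if N [:0, 1:] \<le> 1 then rad N
                 else (case berk_inv absv x of None \<Rightarrow> 0 | Some M \<Rightarrow> rad M))"

definition joinG :: "('a::field \<Rightarrow> real) \<Rightarrow> 'a berk \<Rightarrow> 'a berk \<Rightarrow> 'a berk" where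
  "joinG absv x y = (THE z. z \<in> Berk absv \<and> on_path_G absv x z \<and> on_path_G absv y z \<and>
      (\<forall>w\<in>Berk absv. on_path_G absv x w \<and> on_path_G absv y w \<longrightarrow> on_path_G absv z w))"

definition berk_dist :: "('a::field \<Rightarrow> real) \<Rightarrow> 'a berk \<Rightarrow> 'a berk \<Rightarrow> real" where
  "berk_dist absv x y = 2 * diamG absv (joinG absv x y) - diamG absv x - diamG absv y"

definition Lip_Berk :: "('a::field \<Rightarrow> real) \<Rightarrow> ('a berk \<Rightarrow> 'a berk) \<Rightarrow> 'a berk set \<Rightarrow> ereal" where
  "Lip_Berk absv \<Phi> S = (SUP p \<in> {(x, y). x \<in> S \<and> y \<in> S \<and> x \<noteq> y}.
      ereal (berk_dist absv (\<Phi> (fst p)) (\<Phi> (snd p)) / berk_dist absv (fst p) (snd p)))"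

text \<open>Phi = P/Q; for a seminorm x with [Q]_x \<noteq> 0, [f]_{Phi(x)} = [f(P/Q)]_x.\<close>
definition subst_rat :: "'a::field poly \<Rightarrow> 'a poly \<Rightarrow> 'a poly \<Rightarrow> 'a poly" where
  "subst_rat P Q f = (\<Sum>i\<le>degree f. smult (coeff f i) (P ^ i * Q ^ (degree f - i)))"

definition rat_berk :: "('a::field \<Rightarrow> real) \<Rightarrow> 'a poly \<Rightarrow> 'a poly \<Rightarrow> 'a berk \<Rightarrow> 'a berk" where
  "rat_berk absv P Q x = (case x of
       None \<Rightarrow> if degree P > degree Q then None
               else Some (typeI absv (coeff P (degree Q) / lead_coeff Q))
     | Some N \<Rightarrow> if N Q = 0 then None
                 else Some (\<lambda>f. N (subst_rat P Q f) / N Q ^ degree f))"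

definition Qpt :: "('a::field \<Rightarrow> real) \<Rightarrow> 'a berk \<Rightarrow> real \<Rightarrow> 'a berk" where
  "Qpt absv a r = (THE y. y \<in> Berk absv \<and> on_path_G absv a y \<and> diamG absv y = r)"

definition ball_minus :: "('a::field \<Rightarrow> real) \<Rightarrow> 'a berk \<Rightarrow> real \<Rightarrow> 'a berk set" where
  "ball_minus absv a r =
     (if r < 1 then {x \<in> Berk absv. on_path_G absv x (Qpt absv a r) \<and> Qpt absv a r \<noteq> x}
      else (\<Union>s\<in>{s. 0 < s \<and> s < 1}. {x \<in> Berk absv. on_path_G absv x (Qpt absv a s) \<and> Qpt absv a s \<noteq> x}))"

definition B0 :: "('a::field \<Rightarrow> real) \<Rightarrow> ('a berk \<Rightarrow> 'a berk) \<Rightarrow> real" where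
  "B0 absv \<Phi> = Sup {r. 0 < r \<and> r \<le> 1 \<and>
      (\<forall>a\<in>P1K absv. \<Phi> ` ball_minus absv a r \<noteq> Berk absv)}"

end

theory Submission
  imports Defs
begin

text \<open>Write c = \<Phi>(0) and g = P - c Q. Since Q has no zeros in D(0,B_0)^-, its Gauss norm on
  D(0,r) is |Q(0)| for r \<le> B_0, so \<Phi> sends \<zeta>_{0,r} to a point of the closed unit disc of diameter
  \<parallel>g\<parallel>_r / |Q(0)|; both r \<mapsto> \<zeta>_{0,r} and its image run along chains of comparable seminorms,
  on which the Berkovich distance is the difference of diameters. As \<Phi> maps D(0,B_0)^- into
  D(c,1), the maximum modulus principle gives |g_i| B_0^i \<le> |Q(0)| for every coefficient, and
  since g_0 = 0 the function r \<mapsto> max_i |g_i| r^i has slope at most d |Q(0)| / B_0. The segment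
  lies in the closed unit disc, i.e. B_0 \<le> 1, because small balls separate the zeros of \<Phi> from
  its poles, so their images miss 0 or \<infinity>.\<close>

lemma le_of_power_le_linear_mult:
  fixes x M :: real
  assumes x: "0 \<le> x" and M: "0 \<le> M" and bound: "\<And>n. x ^ n \<le> real (n + 1) * M ^ n"
  shows "x \<le> M"
proof (rule ccontr)
  assume "\<not> x \<le> M"
  then have xM: "M < x" by simp
  show False
  proof (cases "M = 0")
    case True
    then show False using bound[of 1] xM by simp
  next
    case False
    then have Mp: "M > 0" using M by simp
    define y where "y = x / M - 1"
    have y: "y > 0" using xM Mp by (simp add: y_def field_simps)
    obtain m :: nat where m: "real m > 3 / y ^ 2" using reals_Archimedean2 by blast
    define n where "n = Suc m"
    have n: "real n > 3 / y ^ 2" "n \<ge> 1" using m by (simp_all add: n_def)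
    have "real n * y \<le> (1 + y) ^ n" using Bernoulli_inequality[of y n] y by simp
    then have "(real n * y) ^ 2 \<le> ((1 + y) ^ n) ^ 2" using y by (intro power_mono) auto
    also have "\<dots> = (1 + y) ^ (2 * n)" by (simp add: power_mult[symmetric] mult.commute)
    also have "(1 + y) ^ (2 * n) = x ^ (2 * n) / M ^ (2 * n)" by (simp add: y_def power_divide)
    also have "\<dots> \<le> real (2 * n + 1)" using bound[of "2 * n"] Mp by (simp add: divide_le_eq)
    finally have "real n * (real n * y ^ 2) \<le> 2 * real n + 1" by (simp add: power2_eq_square ac_simps)
    moreover have "real n * (real n * y ^ 2) > real n * 3"
      using n y by (intro mult_strict_left_mono) (auto simp: field_simps)
    ultimately show False using n by linarith
  qed
qed

lemma mult_strict_mono_either: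
  fixes x y A B :: real
  assumes "0 \<le> x" "x \<le> A" "0 \<le> y" "y \<le> B" "0 < A" "0 < B" "x < A \<or> y < B"
  shows "x * y < A * B"
proof (cases "x < A")
  case True
  have "x * y \<le> x * B" using assms by (intro mult_left_mono) auto
  also have "\<dots> < A * B" using True assms by (intro mult_strict_right_mono)
  finally show ?thesis .
next
  case False
  then have "y < B" using assms by auto
  have "x * y \<le> A * y" using assms by (intro mult_right_mono) auto
  also have "\<dots> < A * B" using \<open>y < B\<close> assms by (intro mult_strict_left_mono)
  finally show ?thesis .
qed

section \<open>Homogenised substitution\<close>

abbreviation X :: "'a::field poly" where "X \<equiv> [:0, 1:]"

text \<open>For \<open>degree f \<le> n\<close>, \<open>homog_subst P Q n f\<close> is \<open>Q^n f(P/Q)\<close>.\<close>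
definition homog_subst :: "'a::field poly \<Rightarrow> 'a poly \<Rightarrow> nat \<Rightarrow> 'a poly \<Rightarrow> 'a poly" where
  "homog_subst P Q n f = (\<Sum>i\<le>n. smult (coeff f i) (P ^ i * Q ^ (n - i)))"

lemma subst_rat_eq_homog_subst: "subst_rat P Q f = homog_subst P Q (degree f) f"
  by (simp add: subst_rat_def homog_subst_def)

lemma homog_subst_pad:
  assumes "degree f \<le> n" shows "homog_subst P Q n f = subst_rat P Q f * Q ^ (n - degree f)"
proof -
  have "homog_subst P Q n f = (\<Sum>i\<le>degree f. smult (coeff f i) (P ^ i * Q ^ (n - i)))"
    unfolding homog_subst_def using assms by (intro sum.mono_neutral_right) (auto simp: coeff_eq_0)
  also have "\<dots> = (\<Sum>i\<le>degree f. smult (coeff f i) (P ^ i * Q ^ (degree f - i)) * Q ^ (n - degree f))"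
  proof (intro sum.cong refl)
    fix i assume "i \<in> {..degree f}"
    then have "Q ^ (n - i) = Q ^ (degree f - i) * Q ^ (n - degree f)"
      using assms by (simp add: power_add[symmetric])
    then show "smult (coeff f i) (P ^ i * Q ^ (n - i))
             = smult (coeff f i) (P ^ i * Q ^ (degree f - i)) * Q ^ (n - degree f)"
      by (simp add: mult.assoc)
  qed
  also have "\<dots> = subst_rat P Q f * Q ^ (n - degree f)"
    by (simp add: subst_rat_def sum_distrib_right)
  finally show ?thesis .
qed

lemma homog_subst_add: "homog_subst P Q n (f + g) = homog_subst P Q n f + homog_subst P Q n g"
  by (simp add: homog_subst_def smult_add_left sum.distrib)

lemma smult_sum_right: "smult c (sum f A) = (\<Sum>i\<in>A. smult c (f i))"
  by (induction A rule: infinite_finite_induct) (simp_all add: smult_add_right)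

lemma homog_subst_smult: "homog_subst P Q n (smult c f) = smult c (homog_subst P Q n f)"
  by (simp add: homog_subst_def smult_sum_right)

lemma homog_subst_raise:
  assumes "degree g \<le> n" shows "homog_subst P Q (k + n) g = Q ^ k * homog_subst P Q n g"
proof -
  have "degree g \<le> k + n" using assms by simp
  moreover have "Q ^ (k + n - degree g) = Q ^ k * Q ^ (n - degree g)"
    using assms by (simp add: power_add[symmetric])
  ultimately show ?thesis
    using homog_subst_pad[OF assms] homog_subst_pad[of g "k + n"] by (simp add: mult_ac)
qed

lemma homog_subst_const: "homog_subst P Q n [:c:] = smult c (Q ^ n)"
  using homog_subst_raise[of "[:c:]" 0 P Q n] by (simp add: homog_subst_def)

lemma homog_subst_shift: "homog_subst P Q (Suc k) (pCons 0 h) = P * homog_subst P Q k h"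
  unfolding homog_subst_def by (subst sum.atMost_Suc_shift) (simp add: sum_distrib_left mult_ac)

lemma homog_subst_pCons:
  "homog_subst P Q (Suc m) (pCons a f) = smult a (Q ^ Suc m) + P * homog_subst P Q m f"
proof -
  have "pCons a f = [:a:] + pCons 0 f" by simp
  then show ?thesis by (metis homog_subst_add homog_subst_const homog_subst_shift)
qed

lemma homog_subst_mult:
  "degree f \<le> m \<Longrightarrow> degree g \<le> n \<Longrightarrow>
     homog_subst P Q (m + n) (f * g) = homog_subst P Q m f * homog_subst P Q n g"
proof (induction f arbitrary: m rule: pCons_induct)
  case 0
  then show ?case by (simp add: homog_subst_def)
next
  case (pCons a f)
  show ?case
  proof (cases m)
    case 0
    then have "f = 0" using pCons.prems(1) pCons.hyps by (auto split: if_splits)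
    then show ?thesis using 0 homog_subst_raise[OF pCons.prems(2), of P Q 0]
      by (simp add: homog_subst_smult homog_subst_const)
  next
    case (Suc k)
    then have dk: "degree f \<le> k" using pCons.prems(1) by (auto split: if_splits)
    have dfg: "degree (f * g) \<le> k + n" using dk pCons.prems(2) degree_mult_le[of f g] by linarith
    have "pCons a f * g = smult a g + pCons 0 (f * g)" by simp
    then have "homog_subst P Q (m + n) (pCons a f * g)
             = smult a (Q ^ Suc k * homog_subst P Q n g) + P * homog_subst P Q (k + n) (f * g)"
      using homog_subst_raise[OF pCons.prems(2), of P Q "Suc k"] homog_subst_shift[of P Q "k + n"]
      by (simp add: Suc homog_subst_add homog_subst_smult)
    also have "\<dots> = homog_subst P Q m (pCons a f) * homog_subst P Q n g"
      using pCons.IH[OF dk pCons.prems(2)] by (simp add: Suc homog_subst_pCons algebra_simps)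
    finally show ?thesis .
  qed
qed

lemma subst_rat_mult: "subst_rat P Q (f * g) = subst_rat P Q f * subst_rat P Q g"
proof (cases "f = 0 \<or> g = 0")
  case True
  then show ?thesis by (auto simp: subst_rat_def)
next
  case False
  then have "degree (f * g) = degree f + degree g" by (intro degree_mult_eq) auto
  then show ?thesis by (simp add: subst_rat_eq_homog_subst homog_subst_mult)
qed

lemma subst_rat_const [simp]: "subst_rat P Q [:c:] = [:c:]"
  by (simp add: subst_rat_def)

lemma subst_rat_X: "subst_rat P Q X = P"
  by (simp add: subst_rat_def)

lemma subst_rat_linear: "subst_rat P Q [:-a, 1:] = P - smult a Q"
  by (simp add: subst_rat_def)

lemma subst_rat_1_X: "subst_rat 1 X f = inv_poly f"
  unfolding subst_rat_def inv_poly_def by (intro sum.cong refl) (simp add: monom_altdef)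

lemma coeff_homog_subst_1_X: "coeff (homog_subst 1 X n f) j = (if j \<le> n then coeff f (n - j) else 0)"
proof -
  have "coeff (homog_subst 1 X n f) j = (\<Sum>i\<le>n. if n - i = j then coeff f i else 0)"
    unfolding homog_subst_def by (simp add: coeff_sum monom_altdef[symmetric])
  also have "\<dots> = (if j \<le> n then coeff f (n - j) else 0)"
  proof (cases "j \<le> n")
    case True
    have "(\<Sum>i\<le>n. if n - i = j then coeff f i else 0) = (\<Sum>i\<le>n. if i = n - j then coeff f i else 0)"
      by (intro sum.cong refl) (use True in auto)
    then show ?thesis using True by simp
  qed (auto intro: sum.neutral)
  finally show ?thesis .
qed

lemma degree_homog_subst_1_X: "degree (homog_subst 1 X n f) \<le> n"
  by (rule degree_le) (simp add: coeff_homog_subst_1_X)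

lemma homog_subst_1_X_involution: "degree f \<le> n \<Longrightarrow> homog_subst 1 X n (homog_subst 1 X n f) = f"
  by (rule poly_eqI) (auto simp: coeff_homog_subst_1_X coeff_eq_0)

lemma inv_poly_eq_reflect_poly: "inv_poly f = reflect_poly f"
  by (rule poly_eqI)
    (simp add: subst_rat_1_X[symmetric] subst_rat_eq_homog_subst coeff_homog_subst_1_X coeff_reflect_poly)

section \<open>Nonarchimedean absolute values\<close>

locale nonarch_field =
  fixes absv :: "'a::field \<Rightarrow> real"
  assumes nonarch_cac: "nonarch_cac_field absv"
begin

lemma av_nonneg [simp]: "absv x \<ge> 0"
  using nonarch_cac unfolding nonarch_cac_field_def by blast

lemma av_eq_0_iff [simp]: "absv x = 0 \<longleftrightarrow> x = 0"
  using nonarch_cac unfolding nonarch_cac_field_def by blast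

lemma av_mult: "absv (x * y) = absv x * absv y"
  using nonarch_cac unfolding nonarch_cac_field_def by blast

lemma av_add: "absv (x + y) \<le> max (absv x) (absv y)"
  using nonarch_cac unfolding nonarch_cac_field_def by blast

lemma av_nontrivial: "\<exists>x. absv x \<noteq> 0 \<and> absv x \<noteq> 1"
  using nonarch_cac unfolding nonarch_cac_field_def by blast

lemma poly_has_root: fixes p :: "'a poly" assumes "degree p \<ge> 1" shows "\<exists>z. poly p z = 0"
  using nonarch_cac assms unfolding nonarch_cac_field_def by blast

lemma av_0 [simp]: "absv 0 = 0"
  by simp

lemma av_pos: "x \<noteq> 0 \<Longrightarrow> absv x > 0"
  using av_nonneg[of x] av_eq_0_iff[of x] by linarith

lemma av_1 [simp]: "absv 1 = 1"
  using av_mult[of 1 1] by (metis av_eq_0_iff mult_cancel_right2 one_neq_zero)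

lemma av_minus_1 [simp]: "absv (-1) = 1"
proof -
  have "absv (-1) * absv (-1) = 1" using av_mult[of "-1" "-1"] by simp
  then show ?thesis using av_nonneg[of "-1"] by (metis abs_of_nonneg abs_square_eq_1 power2_eq_square)
qed

lemma av_uminus [simp]: "absv (- x) = absv x"
  using av_mult[of "-1" x] by simp

lemma av_minus_commute: "absv (x - y) = absv (y - x)"
  by (metis av_uminus minus_diff_eq)

lemma av_inverse: "absv (inverse x) = inverse (absv x)"
proof (cases "x = 0")
  case False
  then have "absv (inverse x) * absv x = 1" using av_mult[of "inverse x" x] by simp
  then show ?thesis using av_pos[OF False] by (simp add: field_simps del: av_eq_0_iff)
qed simp

lemma av_power: "absv (x ^ n) = absv x ^ n"
  by (induction n) (simp_all add: av_mult)

lemma av_power_int: "absv (x powi k) = absv x powi k"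
  by (simp add: power_int_def av_power av_inverse power_inverse)

lemma av_diff: "absv (x - y) \<le> max (absv x) (absv y)"
  using av_add[of x "-y"] by simp

lemma av_add_triangle: "absv (x + y) \<le> absv x + absv y"
  using av_add[of x y] av_nonneg[of x] av_nonneg[of y] by linarith

lemma av_add_dominant: assumes "absv y < absv x" shows "absv (x + y) = absv x"
proof -
  have "absv (x + y) \<le> absv x" using av_add[of x y] assms by simp
  moreover have "absv x \<le> max (absv (x + y)) (absv y)" using av_add[of "x + y" "-y"] by simp
  ultimately show ?thesis using assms by linarith
qed

lemma av_diff_dominant: "absv y < absv x \<Longrightarrow> absv (x - y) = absv x"
  using av_add_dominant[of "-y" x] by simp

lemma av_of_nat_le_1: "absv (of_nat n) \<le> 1"
proof (induction n)
  case (Suc n)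
  then show ?case using av_add[of 1 "of_nat n"] by simp
qed simp

lemma av_sum_le:
  "finite A \<Longrightarrow> (\<And>i. i \<in> A \<Longrightarrow> absv (f i) \<le> c) \<Longrightarrow> c \<ge> 0 \<Longrightarrow> absv (sum f A) \<le> c"
proof (induction A rule: finite_induct)
  case (insert x F)
  then have "absv (f x) \<le> c" "absv (sum f F) \<le> c" by auto
  then show ?case using av_add[of "f x" "sum f F"] by (simp add: insert(1,2))
qed simp

lemma av_sum_less:
  "finite A \<Longrightarrow> (\<And>i. i \<in> A \<Longrightarrow> absv (f i) < c) \<Longrightarrow> c > 0 \<Longrightarrow> absv (sum f A) < c"
proof (induction A rule: finite_induct)
  case (insert x F)
  then have "absv (f x) < c" "absv (sum f F) < c" by auto
  then show ?case using av_add[of "f x" "sum f F"] by (simp add: insert(1,2))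
qed simp

lemma exists_root: "n > 0 \<Longrightarrow> \<exists>y. y ^ n = (x::'a)"
proof -
  assume n: "n > 0"
  then have "degree (monom 1 n + [:-x:]) = n"
    by (subst degree_add_eq_left) (simp_all add: degree_monom_eq)
  then obtain y where "poly (monom 1 n + [:-x:]) y = 0"
    using poly_has_root[of "monom 1 n + [:-x:]"] n by auto
  then show ?thesis by (auto simp: poly_monom)
qed

lemma exists_av_gt_1: "\<exists>c. absv c > 1"
proof -
  obtain c where c: "absv c \<noteq> 0" "absv c \<noteq> 1" using av_nontrivial by blast
  show ?thesis
  proof (cases "absv c < 1")
    case True
    then show ?thesis using c av_pos[of c] by (intro exI[of _ "inverse c"]) (simp add: av_inverse one_less_inverse)
  qed (use c in \<open>auto simp: not_less intro: exI[of _ c]\<close>)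
qed

text \<open>The value group is divisible because \<open>K\<close> is algebraically closed.\<close>
lemma exists_av_small_log: assumes "\<delta> > 0" shows "\<exists>w. 0 < ln (absv w) \<and> ln (absv w) < \<delta>"
proof -
  obtain c where c: "absv c > 1" using exists_av_gt_1 by blast
  define L where "L = ln (absv c)"
  have L: "L > 0" using c by (simp add: L_def)
  obtain m :: nat where m: "real m > L / \<delta>" using reals_Archimedean2 by blast
  moreover have "L / \<delta> > 0" using L assms by simp
  ultimately have m0: "m > 0" by (auto intro!: Nat.gr0I)
  obtain w where w: "w ^ m = c" using exists_root m0 by blast
  then have "w \<noteq> 0" using c m0 by (auto simp: zero_power)
  have "m * ln (absv w) = L"
    using w av_pos[OF \<open>w \<noteq> 0\<close>] by (metis L_def av_power ln_realpow)
  then have lw: "ln (absv w) = L / m" using m0 by (simp add: field_simps)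
  have "L / m < \<delta>" using m m0 assms by (simp add: field_simps)
  then show ?thesis using lw L m0 by (intro exI[of _ w]) simp
qed

text \<open>The absolute values of \<open>card F + 1\<close> consecutive powers of an element of small positive
  logarithmic absolute value lie in \<open>(r, B)\<close>, and one of them avoids \<open>F\<close>.\<close>
lemma exists_av_between_avoiding:
  assumes "0 \<le> r" "r < B" "finite F"
  shows "\<exists>z. r < absv z \<and> absv z < B \<and> absv z \<notin> F"
proof -
  define r0 where "r0 = max r (B / 2)"
  have r0: "0 < r0" "r0 < B" "r \<le> r0" using assms by (auto simp: r0_def)
  define n where "n = card F"
  define a where "a = ln r0"
  have ab: "a < ln B" using r0 by (simp add: a_def)
  obtain w where w: "0 < ln (absv w)" "ln (absv w) < (ln B - a) / (n + 2)"
    using exists_av_small_log[of "(ln B - a) / (n + 2)"] ab by auto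
  define \<rho> where "\<rho> = absv w"
  have \<rho>: "\<rho> > 0" using w(1) av_pos[of w] unfolding \<rho>_def by (cases "w = 0") auto
  define l where "l = ln \<rho>"
  have l: "0 < l" "(real n + 2) * l < ln B - a" using w by (simp_all add: l_def \<rho>_def field_simps)
  define k0 where "k0 = \<lfloor>a / l\<rfloor> + 1"
  have k0: "a < k0 * l" "k0 * l \<le> a + l"
  proof -
    have "a / l < k0" "k0 \<le> a / l + 1" unfolding k0_def by linarith+
    then show "a < k0 * l" "k0 * l \<le> a + l" using l by (simp_all add: field_simps)
  qed
  define t where "t = (\<lambda>j::nat. \<rho> powi (k0 + int j))"
  have ln_t: "ln (t j) = (k0 + int j) * l" for j
  proof -
    have "ln (\<rho> powi k) = k * ln \<rho>" for k
      using \<rho> by (auto simp: power_int_def ln_realpow ln_inverse power_inverse)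
    then show ?thesis by (simp add: t_def l_def)
  qed
  have t_between: "r0 < t j \<and> t j < B" if "j \<le> n" for j
  proof -
    have e: "ln (t j) = k0 * l + real j * l" by (simp add: ln_t distrib_right)
    have "0 \<le> real j * l" "real j * l \<le> real n * l" using that l by (auto intro: mult_right_mono)
    moreover have "(real n + 2) * l = real n * l + 2 * l" by (simp add: algebra_simps)
    ultimately have "a < ln (t j) \<and> ln (t j) < ln B" using e k0 l by linarith
    then show ?thesis using r0 \<rho> by (simp add: a_def t_def ln_less_cancel_iff)
  qed
  have "inj_on t {..n}"
  proof (rule inj_onI)
    fix i j assume "t i = t j"
    then have "(k0 + int i) * l = (k0 + int j) * l" using ln_t by metis
    then show "i = j" using l by simp
  qed
  then have "card (t ` {..n}) = n + 1" by (simp add: card_image)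
  then have "\<not> t ` {..n} \<subseteq> F" using card_mono[OF assms(3), of "t ` {..n}"] n_def by linarith
  then obtain j where j: "j \<le> n" "t j \<notin> F" by auto
  have "absv (w powi (k0 + int j)) = t j" by (simp add: av_power_int t_def \<rho>_def)
  then show ?thesis using t_between[OF j(1)] j(2) r0(3) by (intro exI[of _ "w powi (k0 + int j)"]) auto
qed

section \<open>Gauss norms\<close>

definition gauss :: "real \<Rightarrow> 'a poly \<Rightarrow> real" where
  "gauss r g = Max ((\<lambda>i. absv (coeff g i) * r ^ i) ` {..degree g})"

lemma gauss_attained: "\<exists>i\<le>degree g. gauss r g = absv (coeff g i) * r ^ i"
proof -
  have "gauss r g \<in> (\<lambda>i. absv (coeff g i) * r ^ i) ` {..degree g}"
    unfolding gauss_def by (rule Max_in) auto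
  then show ?thesis by auto
qed

lemma gauss_ge_coeff: "i \<le> degree g \<Longrightarrow> absv (coeff g i) * r ^ i \<le> gauss r g"
  unfolding gauss_def by (rule Max_ge) auto

lemma gauss_nonneg: "0 \<le> gauss r g"
proof -
  have "absv (coeff g 0) \<le> gauss r g" using gauss_ge_coeff[of 0 g r] by simp
  then show ?thesis using av_nonneg[of "coeff g 0"] by linarith
qed

lemma gauss_ge: "0 \<le> r \<Longrightarrow> absv (coeff g i) * r ^ i \<le> gauss r g"
  by (cases "i \<le> degree g") (auto simp: gauss_ge_coeff gauss_nonneg coeff_eq_0)

lemma gauss_le: "(\<And>i. absv (coeff g i) * r ^ i \<le> c) \<Longrightarrow> gauss r g \<le> c"
  using gauss_attained[of g r] by auto

lemma gauss_0 [simp]: "gauss r 0 = 0"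
  by (simp add: gauss_def)

lemma gauss_const [simp]: "gauss r [:c:] = absv c"
  by (simp add: gauss_def)

lemma gauss_uminus [simp]: "gauss r (- f) = gauss r f"
  by (simp add: gauss_def)

lemma av_poly_0_le_gauss: "0 \<le> r \<Longrightarrow> absv (poly f 0) \<le> gauss r f"
  using gauss_ge[of r f 0] by (simp add: poly_0_coeff_0)

lemma gauss_add: assumes "0 \<le> r" shows "gauss r (f + g) \<le> max (gauss r f) (gauss r g)"
proof (rule gauss_le)
  fix i
  have "absv (coeff (f + g) i) * r ^ i \<le> max (absv (coeff f i)) (absv (coeff g i)) * r ^ i"
    using av_add[of "coeff f i" "coeff g i"] assms by (simp add: mult_right_mono)
  also have "\<dots> \<le> max (gauss r f) (gauss r g)"
    using gauss_ge[OF assms, of f i] gauss_ge[OF assms, of g i]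
    by (simp add: max_mult_distrib_right assms max_def)
  finally show "absv (coeff (f + g) i) * r ^ i \<le> max (gauss r f) (gauss r g)" .
qed

lemma gauss_diff: "0 \<le> r \<Longrightarrow> gauss r (f - g) \<le> max (gauss r f) (gauss r g)"
  using gauss_add[of r f "-g"] by simp

lemma gauss_smult: assumes "0 \<le> r" shows "gauss r (smult c f) = absv c * gauss r f"
proof (rule antisym)
  show "gauss r (smult c f) \<le> absv c * gauss r f"
    by (rule gauss_le) (simp add: av_mult mult.assoc mult_left_mono gauss_ge[OF assms])
  obtain i where "gauss r f = absv (coeff f i) * r ^ i" using gauss_attained by blast
  then show "absv c * gauss r f \<le> gauss r (smult c f)"
    using gauss_ge[OF assms, of "smult c f" i] by (simp add: av_mult mult.assoc)
qed

lemma gauss_mono: assumes "0 \<le> r" "r \<le> s" shows "gauss r f \<le> gauss s f"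
proof (rule gauss_le)
  fix i
  have "absv (coeff f i) * r ^ i \<le> absv (coeff f i) * s ^ i"
    using assms by (intro mult_left_mono power_mono) auto
  then show "absv (coeff f i) * r ^ i \<le> gauss s f" using gauss_ge[of s f i] assms by linarith
qed

lemma gauss_eq_0_iff: assumes "0 < r" shows "gauss r f = 0 \<longleftrightarrow> f = 0"
proof
  assume "gauss r f = 0"
  then have "absv (coeff f i) * r ^ i \<le> 0" for i using gauss_ge[of r f i] assms by simp
  then have "coeff f i = 0" for i using assms
    by (metis av_pos mult_le_0_iff not_le zero_less_power)
  then show "f = 0" by (simp add: poly_eqI)
qed simp

lemma gauss_linear: assumes "0 \<le> r" shows "gauss r [:-a, 1:] = max (absv a) r"
proof (rule antisym)
  show "gauss r [:-a, 1:] \<le> max (absv a) r"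
    by (rule gauss_le) (auto simp: coeff_pCons assms max.coboundedI2 split: nat.splits)
  show "max (absv a) r \<le> gauss r [:-a, 1:]"
    using gauss_ge[OF assms, of "[:-a,1:]" 0] gauss_ge[OF assms, of "[:-a,1:]" 1] by (simp add: max_def)
qed

lemma gauss_mult_le: assumes "0 \<le> r" shows "gauss r (f * g) \<le> gauss r f * gauss r g"
proof (rule gauss_le)
  fix n
  show "absv (coeff (f * g) n) * r ^ n \<le> gauss r f * gauss r g"
  proof (cases "r ^ n = 0")
    case True
    show ?thesis unfolding True using gauss_nonneg[of r f] gauss_nonneg[of r g] by simp
  next
    case False
    then have rn: "r ^ n > 0" using assms by (simp add: order_neq_le_trans)
    have "absv (\<Sum>k\<le>n. coeff f k * coeff g (n - k)) \<le> gauss r f * gauss r g / r ^ n"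
    proof (rule av_sum_le)
      fix k assume k: "k \<in> {..n}"
      have X: "absv (coeff f k) * r ^ k * (absv (coeff g (n - k)) * r ^ (n - k)) \<le> gauss r f * gauss r g"
        using gauss_ge[OF assms] gauss_nonneg by (intro mult_mono) (auto simp: assms)
      have rk: "r ^ k * r ^ (n - k) = r ^ n" using k by (simp add: power_add[symmetric])
      have "absv (coeff f k * coeff g (n - k)) * r ^ n \<le> gauss r f * gauss r g"
        using X by (subst rk[symmetric]) (simp add: av_mult ac_simps)
      then show "absv (coeff f k * coeff g (n - k)) \<le> gauss r f * gauss r g / r ^ n"
        using rn by (simp add: pos_le_divide_eq)
    qed (use gauss_nonneg rn in auto)
    then show ?thesis using rn by (simp add: coeff_mult field_simps)
  qed
qed

text \<open>Gauss's lemma: in the coefficient of \<open>X^(i0+j0)\<close> of \<open>f * g\<close>, where \<open>i0\<close> and \<open>j0\<close> are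
  the least indices at which \<open>gauss r f\<close> and \<open>gauss r g\<close> are attained, the term
  \<open>coeff f i0 * coeff g j0\<close> strictly dominates all others.\<close>
lemma gauss_mult_ge:
  assumes r: "0 < r" and f0: "f \<noteq> 0" and g0: "g \<noteq> 0"
  shows "gauss r f * gauss r g \<le> gauss r (f * g)"
proof -
  have r0: "0 \<le> r" using r by simp
  define A where "A = gauss r f"
  define B where "B = gauss r g"
  have A0: "A > 0" and B0: "B > 0"
    using gauss_eq_0_iff[OF r] gauss_nonneg f0 g0 unfolding A_def B_def
    by (metis order_neq_le_trans)+
  define i0 where "i0 = (LEAST i. absv (coeff f i) * r ^ i = A)"
  define j0 where "j0 = (LEAST i. absv (coeff g i) * r ^ i = B)"
  have i0: "absv (coeff f i0) * r ^ i0 = A" unfolding i0_def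
    by (rule LeastI_ex) (metis A_def gauss_attained)
  have j0: "absv (coeff g j0) * r ^ j0 = B" unfolding j0_def
    by (rule LeastI_ex) (metis B_def gauss_attained)
  have below_i0: "absv (coeff f k) * r ^ k < A" if "k < i0" for k
    using not_less_Least[OF that[unfolded i0_def]] gauss_ge[OF r0, of f k] unfolding A_def by fastforce
  have below_j0: "absv (coeff g k) * r ^ k < B" if "k < j0" for k
    using not_less_Least[OF that[unfolded j0_def]] gauss_ge[OF r0, of g k] unfolding B_def by fastforce
  define n where "n = i0 + j0"
  have rn: "r ^ n > 0" using r by simp
  define h where "h = (\<lambda>k. coeff f k * coeff g (n - k))"
  have main: "absv (h i0) = A * B / r ^ n"
    using i0 j0 r by (simp add: h_def n_def av_mult field_simps power_add)
  have rest: "absv (sum h ({..n} - {i0})) < A * B / r ^ n"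
  proof (rule av_sum_less)
    fix k assume k: "k \<in> {..n} - {i0}"
    have fk: "0 \<le> absv (coeff f k) * r ^ k" "absv (coeff f k) * r ^ k \<le> A"
      using gauss_ge[OF r0] r0 by (auto simp: A_def)
    have gk: "0 \<le> absv (coeff g (n - k)) * r ^ (n - k)" "absv (coeff g (n - k)) * r ^ (n - k) \<le> B"
      using gauss_ge[OF r0] r0 by (auto simp: B_def)
    have "k < i0 \<or> n - k < j0" using k unfolding n_def by auto
    then have X: "absv (coeff f k) * r ^ k * (absv (coeff g (n - k)) * r ^ (n - k)) < A * B"
      using below_i0 below_j0 fk gk A0 B0 by (intro mult_strict_mono_either) auto
    have rk: "r ^ k * r ^ (n - k) = r ^ n" using k by (simp add: power_add[symmetric])
    have "absv (h k) * r ^ n < A * B"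
      using X by (subst rk[symmetric]) (simp add: h_def av_mult ac_simps)
    then show "absv (h k) < A * B / r ^ n" using rn by (simp add: pos_less_divide_eq)
  qed (use A0 B0 rn in auto)
  have "coeff (f * g) n = h i0 + sum h ({..n} - {i0})"
    unfolding coeff_mult h_def[symmetric] by (subst sum.remove[of _ i0]) (auto simp: n_def)
  then have "absv (coeff (f * g) n) = A * B / r ^ n"
    using av_add_dominant[of "sum h ({..n} - {i0})" "h i0"] main rest by simp
  then show ?thesis using gauss_ge[OF r0, of "f * g" n] r unfolding A_def B_def by simp
qed

lemma gauss_mult: assumes "0 \<le> r" shows "gauss r (f * g) = gauss r f * gauss r g"
proof (cases "f = 0 \<or> g = 0")
  case False
  show ?thesis
  proof (cases "r = 0")
    case True
    have "gauss 0 h = absv (coeff h 0)" for h :: "'a poly"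
      by (rule antisym, rule gauss_le) (auto simp: power_0_left gauss_ge[of 0 h 0, simplified])
    then show ?thesis using True by (simp add: coeff_mult av_mult)
  next
    case False
    then have "r > 0" using assms by simp
    then show ?thesis using gauss_mult_le[OF assms, of f g] gauss_mult_ge[of r f g] \<open>\<not> (f = 0 \<or> g = 0)\<close>
      by (intro antisym) auto
  qed
qed auto

lemma linear_factor_induct [case_names const linear]:
  fixes f :: "'a poly"
  assumes const: "\<And>c. P [:c:]" and linear: "\<And>a g. P g \<Longrightarrow> P ([:-a, 1:] * g)"
  shows "P f"
proof (induction "degree f" arbitrary: f rule: less_induct)
  case less
  show ?case
  proof (cases "degree f = 0")
    case True
    then show ?thesis using const by (metis degree_eq_zeroE)
  next
    case False
    then obtain a where "poly f a = 0" using poly_has_root[of f] by auto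
    then obtain g where g: "f = [:-a, 1:] * g" by (metis dvdE poly_eq_0_iff_dvd)
    then have "g \<noteq> 0" using False by auto
    then have "degree f = Suc (degree g)" unfolding g by (subst degree_mult_eq) auto
    then have "degree g < degree f" by simp
    then show ?thesis using less g linear by metis
  qed
qed

lemma poly_linear_mult_eq_0_iff: fixes g :: "'a poly" shows "poly ([:-a, 1:] * g) b = 0 \<longleftrightarrow> b = a \<or> poly g b = 0"
proof -
  have "poly ([:-a, 1:] * g) b = (b - a) * poly g b" by (simp add: poly_mult del: mult_pCons_left)
  then show ?thesis by simp
qed

lemma gauss_eq_av_poly_0:
  assumes "0 \<le> r" and "\<And>b. poly F b = 0 \<Longrightarrow> r \<le> absv b"
  shows "gauss r F = absv (poly F 0)"
  using assms(2)
proof (induction F rule: linear_factor_induct)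
  case (linear a g)
  then have "gauss r g = absv (poly g 0)" "r \<le> absv a" by (auto simp: poly_linear_mult_eq_0_iff)
  then show ?case using assms(1)
    by (simp add: gauss_mult gauss_linear av_mult max_def poly_mult del: mult_pCons_left)
qed simp

lemma av_poly_eq_av_poly_0:
  assumes "\<And>b. poly F b = 0 \<Longrightarrow> absv z < absv b"
  shows "absv (poly F z) = absv (poly F 0)"
  using assms
proof (induction F rule: linear_factor_induct)
  case (linear a g)
  then have "absv (poly g z) = absv (poly g 0)" "absv z < absv a"
    by (auto simp: poly_linear_mult_eq_0_iff)
  moreover from this(2) have "absv (z - a) = absv a"
    using av_diff_dominant[of z a] av_minus_commute[of z a] by simp
  ultimately show ?case by (simp add: av_mult poly_mult del: mult_pCons_left)
qed simp

lemma av_poly_eq_gauss: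
  assumes "\<And>b. poly F b = 0 \<Longrightarrow> absv b \<noteq> absv z"
  shows "absv (poly F z) = gauss (absv z) F"
  using assms
proof (induction F rule: linear_factor_induct)
  case (linear a g)
  then have "absv (poly g z) = gauss (absv z) g" "absv a \<noteq> absv z"
    by (auto simp: poly_linear_mult_eq_0_iff)
  moreover from this(2) have "absv (z - a) = max (absv a) (absv z)"
    using av_diff_dominant[of a z] av_diff_dominant[of z a] av_minus_commute[of z a]
    by (cases "absv a < absv z") auto
  ultimately show ?case by (simp add: av_mult gauss_mult gauss_linear poly_mult del: mult_pCons_left)
qed simp

lemma gauss_le_of_le_below:
  assumes B: "B > 0" and below: "\<And>r. 0 \<le> r \<Longrightarrow> r < B \<Longrightarrow> gauss r g \<le> c"
  shows "gauss B g \<le> c"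
proof (rule gauss_le, rule ccontr)
  fix i
  define a where "a = absv (coeff g i)"
  assume "\<not> a * B ^ i \<le> c"
  then have big: "c < a * B ^ i" by simp
  have g0: "absv (coeff g 0) \<le> c" using below[of 0] B gauss_ge[of 0 g 0] by simp
  then have "0 \<le> c" using av_nonneg[of "coeff g 0"] by linarith
  have "i > 0" using big g0 by (auto simp: a_def intro!: Nat.gr0I)
  have "a \<noteq> 0" using big \<open>0 \<le> c\<close> by auto
  then have "a > 0" by (simp add: a_def av_pos)
  define t where "t = (root i (c / a) + B) / 2"
  have "root i (c / a) ^ i = c / a" using \<open>i > 0\<close> \<open>0 \<le> c\<close> \<open>a > 0\<close> by simp
  also have "\<dots> < B ^ i" using big \<open>a > 0\<close> by (simp add: pos_divide_less_eq mult.commute)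
  finally have "root i (c / a) < B" by (rule power_less_imp_less_base) (use B in simp)
  then have t: "root i (c / a) < t" "0 \<le> t" "t < B"
    using \<open>0 \<le> c\<close> \<open>a > 0\<close> real_root_ge_zero[of "c / a" i] by (auto simp: t_def)
  have "c / a = root i (c / a) ^ i" using \<open>i > 0\<close> \<open>0 \<le> c\<close> \<open>a > 0\<close> by simp
  also have "\<dots> < t ^ i" using t \<open>i > 0\<close> \<open>0 \<le> c\<close> \<open>a > 0\<close> by (intro power_strict_mono) auto
  finally have "c < a * t ^ i" using \<open>a > 0\<close> by (simp add: pos_divide_less_eq mult.commute)
  also have "\<dots> \<le> gauss t g" using gauss_ge[OF t(2)] by (simp add: a_def)
  finally show False using below[OF t(2,3)] by simp
qed

text \<open>For \<open>r < B\<close>, compare \<open>gauss r g\<close> with \<open>|g(z)|\<close> for some \<open>r < |z| < B\<close> different from the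
  absolute values of all roots of \<open>g\<close>.\<close>
lemma gauss_le_of_av_poly_le:
  assumes B: "B > 0" and bound: "\<And>z. absv z < B \<Longrightarrow> absv (poly g z) \<le> c"
  shows "gauss B g \<le> c"
proof (rule gauss_le_of_le_below[OF B])
  fix r assume r: "0 \<le> r" "r < B"
  show "gauss r g \<le> c"
  proof (cases "g = 0")
    case True
    then show ?thesis using bound[of 0] B by simp
  next
    case False
    have "finite (absv ` {b. poly g b = 0})" using poly_roots_finite[OF False] by simp
    then obtain z where z: "r < absv z" "absv z < B" "absv z \<notin> absv ` {b. poly g b = 0}"
      using exists_av_between_avoiding[OF r] by blast
    then have "absv (poly g z) = gauss (absv z) g"
      by (intro av_poly_eq_gauss) (metis (mono_tags) imageI mem_Collect_eq)
    moreover have "gauss r g \<le> gauss (absv z) g" using r z by (intro gauss_mono) auto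
    ultimately show ?thesis using bound[OF z(2)] by linarith
  qed
qed

lemma power_diff_le_mult:
  assumes "0 \<le> r" "r \<le> (s::real)"
  shows "s ^ i - r ^ i \<le> real i * s ^ (i - 1) * (s - r)"
proof -
  have "s ^ i - r ^ i = (s - r) * (\<Sum>k<i. r ^ (i - Suc k) * s ^ k)" by (rule power_diff_sumr2)
  also have "\<dots> \<le> (s - r) * (\<Sum>k<i. s ^ (i - 1))"
  proof (intro mult_left_mono sum_mono)
    fix k assume k: "k \<in> {..<i}"
    have "r ^ (i - Suc k) * s ^ k \<le> s ^ (i - Suc k) * s ^ k"
      using assms by (intro mult_right_mono power_mono) auto
    also have "\<dots> = s ^ (i - 1)" using k by (simp add: power_add[symmetric])
    finally show "r ^ (i - Suc k) * s ^ k \<le> s ^ (i - 1)" .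
  qed (use assms in auto)
  also have "\<dots> = real i * s ^ (i - 1) * (s - r)" by simp
  finally show ?thesis .
qed

lemma gauss_diff_le_slope:
  assumes g0: "coeff g 0 = 0" and B: "B > 0" and gB: "gauss B g \<le> c"
    and rs: "0 \<le> r" "r \<le> s" "s \<le> B"
  shows "gauss s g - gauss r g \<le> real (degree g) * c / B * (s - r)"
proof -
  obtain i where i: "i \<le> degree g" "gauss s g = absv (coeff g i) * s ^ i" using gauss_attained by blast
  have "gauss s g - gauss r g \<le> absv (coeff g i) * (s ^ i - r ^ i)"
    using i(2) gauss_ge[OF rs(1), of g i] by (simp add: right_diff_distrib)
  also have "\<dots> \<le> absv (coeff g i) * (real i * s ^ (i - 1) * (s - r))"
    by (intro mult_left_mono power_diff_le_mult) (use rs in auto)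
  also have "\<dots> \<le> real (degree g) * c / B * (s - r)"
  proof (cases "i = 0")
    case True
    then show ?thesis using g0 gB gauss_nonneg[of B g] B rs by simp
  next
    case False
    have "absv (coeff g i) * s ^ (i - 1) \<le> absv (coeff g i) * B ^ (i - 1)"
      using rs by (intro mult_left_mono power_mono) auto
    also have "\<dots> = absv (coeff g i) * B ^ i / B" using False B by (simp add: power_eq_if)
    also have "\<dots> \<le> c / B" using gauss_ge[of B g i] gB B by (simp add: divide_right_mono)
    finally have "absv (coeff g i) * s ^ (i - 1) \<le> c / B" .
    then have "real i * (absv (coeff g i) * s ^ (i - 1)) * (s - r) \<le> real (degree g) * (c / B) * (s - r)"
      using i(1) rs by (intro mult_right_mono mult_mono) auto
    then show ?thesis by (simp add: ac_simps)
  qed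
  finally show ?thesis .
qed

lemma gauss_diff_smult_min:
  assumes r: "0 \<le> r" and Q0: "poly Q 0 \<noteq> 0" and gQ: "gauss r Q = absv (poly Q 0)"
  shows "gauss r (P - smult (poly P 0 / poly Q 0) Q) \<le> gauss r (P - smult a Q)"
proof -
  define g where "g = P - smult (poly P 0 / poly Q 0) Q"
  define e where "e = poly P 0 / poly Q 0 - a"
  have P_aQ: "P - smult a Q = g + smult e Q" by (simp add: g_def e_def smult_diff_left)
  have eQ: "gauss r (smult e Q) = absv e * absv (poly Q 0)" by (simp add: gauss_smult[OF r] gQ)
  show ?thesis unfolding g_def[symmetric] P_aQ
  proof (cases "absv e * absv (poly Q 0) \<ge> gauss r g")
    case True
    have "absv (poly (g + smult e Q) 0) = absv e * absv (poly Q 0)" using Q0 by (simp add: g_def av_mult)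
    then show "gauss r g \<le> gauss r (g + smult e Q)" using av_poly_0_le_gauss[OF r, of "g + smult e Q"] True
      by linarith
  next
    case False
    have "gauss r g \<le> max (gauss r (g + smult e Q)) (gauss r (smult e Q))"
      using gauss_diff[OF r, of "g + smult e Q" "smult e Q"] by simp
    then show "gauss r g \<le> gauss r (g + smult e Q)" using False eQ by (simp add: max_def split: if_splits)
  qed
qed

section \<open>Multiplicative seminorms\<close>

lemma berk_aff_nonneg: "is_berk_aff absv N \<Longrightarrow> N f \<ge> 0"
  unfolding is_berk_aff_def by blast

lemma berk_aff_mult: "is_berk_aff absv N \<Longrightarrow> N (f * g) = N f * N g"
  unfolding is_berk_aff_def by blast

lemma berk_aff_triangle: "is_berk_aff absv N \<Longrightarrow> N (f + g) \<le> N f + N g"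
  unfolding is_berk_aff_def by blast

lemma berk_aff_const: "is_berk_aff absv N \<Longrightarrow> N [:c:] = absv c"
  unfolding is_berk_aff_def by blast

lemma berk_aff_0: "is_berk_aff absv N \<Longrightarrow> N 0 = 0"
  using berk_aff_const[of N 0] by simp

lemma berk_aff_1: "is_berk_aff absv N \<Longrightarrow> N 1 = 1"
  using berk_aff_const[of N 1] by (simp add: one_pCons)

lemma berk_aff_smult: "is_berk_aff absv N \<Longrightarrow> N (smult c f) = absv c * N f"
  using berk_aff_mult[of N "[:c:]" f] berk_aff_const[of N c] by simp

lemma berk_aff_uminus: "is_berk_aff absv N \<Longrightarrow> N (- f) = N f"
  using berk_aff_smult[of N "-1" f] by simp

lemma berk_aff_power: "is_berk_aff absv N \<Longrightarrow> N (f ^ n) = N f ^ n"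
  by (induction n) (simp_all add: berk_aff_1 berk_aff_mult)

lemma berk_aff_sum:
  assumes N: "is_berk_aff absv N" shows "finite A \<Longrightarrow> N (sum f A) \<le> (\<Sum>i\<in>A. N (f i))"
proof (induction A rule: finite_induct)
  case empty
  then show ?case by (simp add: berk_aff_0[OF N])
next
  case (insert x F)
  then show ?case using berk_aff_triangle[OF N, of "f x" "sum f F"] by simp
qed

lemma berk_aff_add_power_le:
  assumes N: "is_berk_aff absv N"
  shows "N (f + g) ^ n \<le> real (n + 1) * max (N f) (N g) ^ n"
proof -
  define M where "M = max (N f) (N g)"
  have "N (f + g) ^ n = N (\<Sum>k\<le>n. of_nat (n choose k) * f ^ k * g ^ (n - k))"
    by (simp add: berk_aff_power[OF N, symmetric] binomial_ring)
  also have "\<dots> \<le> (\<Sum>k\<le>n. N (of_nat (n choose k) * f ^ k * g ^ (n - k)))"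
    by (rule berk_aff_sum[OF N]) simp
  also have "\<dots> \<le> (\<Sum>k\<le>n. M ^ n)"
  proof (rule sum_mono)
    fix k assume k: "k \<in> {..n}"
    have "N (of_nat (n choose k) * f ^ k * g ^ (n - k))
        = absv (of_nat (n choose k)) * (N f ^ k * N g ^ (n - k))"
      by (simp add: berk_aff_mult[OF N] berk_aff_power[OF N] of_nat_poly berk_aff_smult[OF N])
    also have "\<dots> \<le> 1 * (M ^ k * M ^ (n - k))"
      using berk_aff_nonneg[OF N] av_of_nat_le_1
      by (intro mult_mono power_mono) (auto simp: M_def le_max_iff_disj)
    also have "\<dots> = M ^ n" using k by (simp add: power_add[symmetric])
    finally show "N (of_nat (n choose k) * f ^ k * g ^ (n - k)) \<le> M ^ n" .
  qed
  finally show ?thesis by (simp add: M_def)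
qed

lemma berk_aff_ultrametric:
  assumes N: "is_berk_aff absv N" shows "N (f + g) \<le> max (N f) (N g)"
proof (rule le_of_power_le_linear_mult)
  show "0 \<le> N (f + g)" by (rule berk_aff_nonneg[OF N])
  show "0 \<le> max (N f) (N g)" using berk_aff_nonneg[OF N, of f] by (simp add: le_max_iff_disj)
qed (rule berk_aff_add_power_le[OF N])

lemma berk_aff_eq_typeI:
  assumes N: "is_berk_aff absv N" and z: "N [:-a, 1:] = 0" shows "N = typeI absv a"
proof
  fix f
  obtain h where h: "f = [:poly f a:] + [:-a, 1:] * h"
  proof -
    have "[:-a, 1:] dvd f - [:poly f a:]" by (simp add: poly_eq_0_iff_dvd[symmetric])
    then obtain h where "f - [:poly f a:] = [:-a, 1:] * h" by (elim dvdE)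
    then show ?thesis using that[of h] by (simp add: algebra_simps)
  qed
  have Nh: "N ([:-a, 1:] * h) = 0" using z by (simp only: berk_aff_mult[OF N] mult_zero_left)
  have "N f \<le> N [:poly f a:]"
    using berk_aff_ultrametric[OF N, of "[:poly f a:]" "[:-a, 1:] * h"] Nh berk_aff_nonneg[OF N, of "[:poly f a:]"]
    by (simp add: h[symmetric] max_def del: mult_pCons_left)
  moreover have "f - [:-a, 1:] * h = [:poly f a:]" using h by (metis add_diff_cancel_right')
  then have "N [:poly f a:] \<le> N f"
    using berk_aff_ultrametric[OF N, of f "- ([:-a, 1:] * h)"] Nh berk_aff_uminus[OF N] berk_aff_nonneg[OF N, of f]
    by (simp add: max_def del: mult_pCons_left)
  ultimately show "N f = typeI absv a f" by (simp add: typeI_def berk_aff_const[OF N])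
qed

lemma berk_aff_eq_typeI_of_zero:
  assumes N: "is_berk_aff absv N" and "Q \<noteq> 0" and "N Q = 0"
  shows "\<exists>a. poly Q a = 0 \<and> N = typeI absv a"
  using assms(2,3)
proof (induction Q rule: linear_factor_induct)
  case (const c)
  then show ?case by (simp add: berk_aff_const[OF N])
next
  case (linear a g)
  then have "g \<noteq> 0" by auto
  from linear.prems(2) have "N [:-a, 1:] = 0 \<or> N g = 0" by (simp only: berk_aff_mult[OF N] mult_eq_0_iff)
  then show ?case
  proof
    assume "N [:-a, 1:] = 0"
    then show ?case using berk_aff_eq_typeI[OF N]
      by (intro exI[of _ a]) (simp add: poly_linear_mult_eq_0_iff del: mult_pCons_left)
  next
    assume "N g = 0"
    then obtain b where "poly g b = 0" "N = typeI absv b" using linear.IH \<open>g \<noteq> 0\<close> by blast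
    then show ?case by (intro exI[of _ b]) (simp add: poly_linear_mult_eq_0_iff del: mult_pCons_left)
  qed
qed

lemma multiplicative_eqI:
  fixes N1 N2 :: "'a poly \<Rightarrow> real"
  assumes "\<And>f g. N1 (f * g) = N1 f * N1 g" and "\<And>f g. N2 (f * g) = N2 f * N2 g"
    and "\<And>c. N1 [:c:] = N2 [:c:]" and "\<And>a. N1 [:-a, 1:] = N2 [:-a, 1:]"
  shows "N1 = N2"
proof
  fix f show "N1 f = N2 f"
    by (induction f rule: linear_factor_induct) (simp_all only: assms)
qed

lemma zeta_eq_gauss_pcompose: "zeta absv a r f = gauss r (f \<circ>\<^sub>p [:a, 1:])"
  by (simp add: zeta_def gauss_def degree_pcompose)

lemma zeta_0_eq_gauss: "zeta absv 0 r = gauss r"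
  by (rule ext) (simp add: zeta_eq_gauss_pcompose)

lemma zeta_mult: "0 \<le> r \<Longrightarrow> zeta absv a r (f * g) = zeta absv a r f * zeta absv a r g"
  by (simp add: zeta_eq_gauss_pcompose pcompose_mult gauss_mult)

lemma zeta_add: "0 \<le> r \<Longrightarrow> zeta absv a r (f + g) \<le> max (zeta absv a r f) (zeta absv a r g)"
  by (simp add: zeta_eq_gauss_pcompose pcompose_add gauss_add)

lemma zeta_const [simp]: "zeta absv a r [:c:] = absv c"
  by (simp add: zeta_eq_gauss_pcompose)

lemma zeta_nonneg: "0 \<le> zeta absv a r f"
  by (simp add: zeta_eq_gauss_pcompose gauss_nonneg)

lemma zeta_linear: assumes "0 \<le> r" shows "zeta absv a r [:-c, 1:] = max (absv (a - c)) r"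
proof -
  have "[:-c, 1:] \<circ>\<^sub>p [:a, 1:] = [:-(c - a), 1:]" by (simp add: pcompose_pCons)
  then show ?thesis using gauss_linear[OF assms, of "c - a"] by (simp add: zeta_eq_gauss_pcompose av_minus_commute)
qed

lemma zeta_X: "0 \<le> r \<Longrightarrow> zeta absv b r [:0, 1:] = max (absv b) r"
  using zeta_linear[of r b 0] by simp

lemma av_poly_le_zeta: "0 \<le> r \<Longrightarrow> absv (poly f a) \<le> zeta absv a r f"
  using av_poly_0_le_gauss[of r "f \<circ>\<^sub>p [:a, 1:]"] by (simp add: zeta_eq_gauss_pcompose poly_pcompose)

lemma zeta_mono: "0 \<le> r \<Longrightarrow> r \<le> s \<Longrightarrow> zeta absv a r f \<le> zeta absv a s f"
  by (simp add: zeta_eq_gauss_pcompose gauss_mono)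

lemma is_berk_aff_zeta: assumes "0 \<le> r" shows "is_berk_aff absv (zeta absv a r)"
  unfolding is_berk_aff_def
proof (intro conjI allI)
  fix f g :: "'a poly"
  show "zeta absv a r (f + g) \<le> zeta absv a r f + zeta absv a r g"
    using zeta_add[OF assms, of a f g] zeta_nonneg[of a r f] zeta_nonneg[of a r g] by linarith
qed (auto simp: zeta_nonneg zeta_mult assms)

lemma is_berk_aff_typeI: "is_berk_aff absv (typeI absv a)"
  unfolding is_berk_aff_def typeI_def
proof (intro conjI allI)
  fix f g :: "'a poly"
  show "absv (poly (f + g) a) \<le> absv (poly f a) + absv (poly g a)"
    using av_add_triangle[of "poly f a" "poly g a"] by simp
qed (auto simp: av_mult)

lemma berk_aff_above_typeI_eq_zeta:
  assumes N: "is_berk_aff absv N" and ge: "\<And>f. absv (poly f b) \<le> N f"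
  shows "N = zeta absv b (N [:-b, 1:])"
proof -
  define t where "t = N [:-b, 1:]"
  have t0: "t \<ge> 0" using berk_aff_nonneg[OF N] by (simp add: t_def)
  have lin: "N [:-c, 1:] = max (absv (b - c)) t" for c
  proof -
    have "N [:-c, 1:] \<le> max t (absv (b - c))"
      using berk_aff_ultrametric[OF N, of "[:-b,1:]" "[:b - c:]"] by (simp add: t_def berk_aff_const[OF N])
    moreover have "absv (b - c) \<le> N [:-c, 1:]" using ge[of "[:-c,1:]"] by simp
    moreover have "t \<le> max (N [:-c, 1:]) (absv (b - c))"
      using berk_aff_ultrametric[OF N, of "[:-c,1:]" "[:c - b:]"]
      by (simp add: t_def berk_aff_const[OF N] av_minus_commute)
    ultimately show ?thesis by (auto simp: max_def split: if_splits)
  qed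
  show ?thesis unfolding t_def[symmetric]
    by (rule multiplicative_eqI)
      (simp_all add: berk_aff_mult[OF N] zeta_mult[OF t0] berk_aff_const[OF N] zeta_linear[OF t0] lin max.commute)
qed

lemma rad_zeta: assumes "0 \<le> r" shows "rad (zeta absv b r) = r"
  unfolding rad_def
proof (rule cInf_eq_minimum)
  show "r \<in> range (\<lambda>a. zeta absv b r [:- a, 1:])"
    using zeta_linear[OF assms, of b b] assms by (auto intro!: image_eqI[of _ _ b])
  fix x assume "x \<in> range (\<lambda>a. zeta absv b r [:- a, 1:])"
  then show "r \<le> x" using zeta_linear[OF assms] by auto
qed

lemma Berk_Some_iff: "Some N \<in> Berk absv \<longleftrightarrow> is_berk_aff absv N"
  by (auto simp: Berk_def)

lemma typeI_in_Berk: "Some (typeI absv a) \<in> Berk absv"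
  using Berk_Some_iff is_berk_aff_typeI by blast

lemma typeI_X: "typeI absv b [:0, 1:] = absv b"
  by (simp add: typeI_def)

lemma typeI_inj: "typeI absv a = typeI absv b \<Longrightarrow> a = b"
  by (drule fun_cong[of _ _ "[:-b, 1:]"]) (simp add: typeI_def)

section \<open>Rational maps and inversion\<close>

text \<open>The point \<open>\<Phi>(N)\<close> for \<open>\<Phi> = P/Q\<close>, meaningful when \<open>N Q \<noteq> 0\<close>.\<close>
definition rat_push :: "'a poly \<Rightarrow> 'a poly \<Rightarrow> 'a bsn \<Rightarrow> 'a bsn" where
  "rat_push P Q N = (\<lambda>f. N (subst_rat P Q f) / N Q ^ degree f)"

lemma rat_berk_Some: "N Q \<noteq> 0 \<Longrightarrow> rat_berk absv P Q (Some N) = Some (rat_push P Q N)"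
  by (simp add: rat_berk_def rat_push_def)

lemma rat_push_triangle:
  assumes N: "is_berk_aff absv N" and q: "N Q > 0"
  shows "rat_push P Q N (f + g) \<le> rat_push P Q N f + rat_push P Q N g"
proof -
  define n where "n = max (degree f) (degree g)"
  have dfg: "degree (f + g) \<le> n" using degree_add_le_max[of f g] by (simp add: n_def)
  have df: "degree f \<le> n" and dg: "degree g \<le> n" by (simp_all add: n_def)
  have padded: "rat_push P Q N h = N (homog_subst P Q n h) / N Q ^ n" if "degree h \<le> n" for h
  proof -
    have "N Q ^ n = N Q ^ (n - degree h) * N Q ^ degree h" using that by (simp add: power_add[symmetric])
    then show ?thesis using q
      by (simp add: rat_push_def homog_subst_pad[OF that] berk_aff_mult[OF N] berk_aff_power[OF N])
  qed
  have "N (homog_subst P Q n (f + g)) \<le> N (homog_subst P Q n f) + N (homog_subst P Q n g)"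
    by (simp add: homog_subst_add berk_aff_triangle[OF N])
  then show ?thesis using q
    by (simp add: padded[OF dfg] padded[OF df] padded[OF dg] add_divide_distrib[symmetric] divide_right_mono)
qed

lemma is_berk_aff_rat_push:
  assumes N: "is_berk_aff absv N" and NQ: "N Q \<noteq> 0"
  shows "is_berk_aff absv (rat_push P Q N)"
  unfolding is_berk_aff_def
proof (intro conjI allI)
  have q: "N Q > 0" using berk_aff_nonneg[OF N, of Q] NQ by simp
  fix f g :: "'a poly"
  show "0 \<le> rat_push P Q N f" unfolding rat_push_def using berk_aff_nonneg[OF N] q by simp
  show "rat_push P Q N (f * g) = rat_push P Q N f * rat_push P Q N g"
  proof (cases "f = 0 \<or> g = 0")
    case True
    then show ?thesis by (auto simp: rat_push_def subst_rat_def berk_aff_0[OF N])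
  next
    case False
    then have "degree (f * g) = degree f + degree g" by (intro degree_mult_eq) auto
    then show ?thesis by (simp add: rat_push_def subst_rat_mult berk_aff_mult[OF N] power_add)
  qed
  show "rat_push P Q N [:c:] = absv c" for c by (simp add: rat_push_def berk_aff_const[OF N])
  show "rat_push P Q N (f + g) \<le> rat_push P Q N f + rat_push P Q N g" by (rule rat_push_triangle[OF N q])
qed

lemma berk_inv_None: "berk_inv absv None = Some (typeI absv 0)"
  by (simp add: berk_inv_def)

lemma berk_inv_Some: "N X \<noteq> 0 \<Longrightarrow> berk_inv absv (Some N) = Some (rat_push 1 X N)"
  by (simp add: berk_inv_def rat_push_def subst_rat_1_X)

lemma berk_inv_Some_0: "N X = 0 \<Longrightarrow> berk_inv absv (Some N) = None"
  by (simp add: berk_inv_def)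

lemma rat_push_inv_X: "is_berk_aff absv N \<Longrightarrow> rat_push 1 X N X = 1 / N X"
  by (simp add: rat_push_def subst_rat_X berk_aff_1)

lemma rat_push_inv_linear: "rat_push 1 X N [:-c, 1:] = N (1 - smult c X) / N X"
  by (simp add: rat_push_def subst_rat_linear)

lemma rat_push_inv_involution:
  assumes N: "is_berk_aff absv N" and NX: "N X \<noteq> 0"
  shows "rat_push 1 X (rat_push 1 X N) = N"
proof
  fix f :: "'a poly"
  define n where "n = degree f"
  define t where "t = N X"
  have t: "t > 0" using berk_aff_nonneg[OF N, of X] NX by (simp add: t_def)
  define s where "s = subst_rat 1 X f"
  have ds: "degree s \<le> n" using degree_homog_subst_1_X by (simp add: s_def n_def subst_rat_eq_homog_subst)
  have "f = homog_subst 1 X n s"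
    using homog_subst_1_X_involution[of f n] by (simp add: s_def n_def subst_rat_eq_homog_subst)
  also have "\<dots> = subst_rat 1 X s * X ^ (n - degree s)" by (rule homog_subst_pad[OF ds])
  finally have A: "N f = N (subst_rat 1 X s) * t ^ (n - degree s)"
    by (metis berk_aff_mult[OF N] berk_aff_power[OF N] t_def)
  have B: "rat_push 1 X (rat_push 1 X N) f = N (subst_rat 1 X s) / t ^ degree s / (1 / t) ^ n"
    unfolding rat_push_def[of 1 X "rat_push 1 X N"] rat_push_inv_X[OF N]
    by (simp add: rat_push_def s_def n_def t_def)
  have "t ^ n = t ^ (n - degree s) * t ^ degree s" using ds by (simp add: power_add[symmetric])
  then show "rat_push 1 X (rat_push 1 X N) f = N f" using t A B by (simp add: power_one_over field_simps)
qed

lemma rat_push_inv_typeI: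
  assumes b: "b \<noteq> 0" shows "rat_push 1 X (typeI absv b) = typeI absv (inverse b)"
proof
  fix f :: "'a poly"
  have "rat_push 1 X (typeI absv b) f = absv (poly (reflect_poly f) b) / absv b ^ degree f"
    by (simp add: rat_push_def typeI_def subst_rat_1_X inv_poly_eq_reflect_poly)
  also have "\<dots> = absv (poly f (inverse b))" using b av_pos[OF b]
    by (simp add: poly_reflect_poly_nz av_mult av_power)
  finally show "rat_push 1 X (typeI absv b) f = typeI absv (inverse b) f" by (simp add: typeI_def)
qed

lemma berk_inv_typeI: "b \<noteq> 0 \<Longrightarrow> berk_inv absv (Some (typeI absv b)) = Some (typeI absv (inverse b))"
  using berk_inv_Some[of "typeI absv b"] rat_push_inv_typeI by (simp add: typeI_X)

lemma zeta_smult_linear: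
  assumes r: "0 \<le> r" shows "zeta absv a r (smult k [:-c, 1:]) = absv k * max (absv (a - c)) r"
  by (subst berk_aff_smult[OF is_berk_aff_zeta[OF r]]) (simp only: zeta_linear[OF r])

lemma one_minus_smult_X: "c \<noteq> 0 \<Longrightarrow> (1 :: 'a poly) - smult c X = smult (- c) [:- inverse c, 1:]"
  by (simp add: one_pCons)

section \<open>The bound \<open>B\<^sub>0 \<le> 1\<close>\<close>

lemma Qpt_typeI_in_unit_disc:
  assumes b: "absv b \<le> 1" and r: "0 < r" "r < 1"
  shows "Qpt absv (Some (typeI absv b)) r = Some (zeta absv b r)"
  unfolding Qpt_def
proof (rule the_equality)
  have r0: "0 \<le> r" using r by simp
  have icx: "in_cdisc (Some (typeI absv b))" using b by (simp add: in_cdisc_def typeI_X)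
  show "Some (zeta absv b r) \<in> Berk absv \<and> on_path_G absv (Some (typeI absv b)) (Some (zeta absv b r))
      \<and> diamG absv (Some (zeta absv b r)) = r"
    using is_berk_aff_zeta[OF r0, of b] icx b r av_poly_le_zeta[OF r0] rad_zeta[OF r0]
    by (simp add: Berk_Some_iff on_path_G_def in_cdisc_def berk_le_def typeI_def diamG_def zeta_X[OF r0])
  fix y assume y: "y \<in> Berk absv \<and> on_path_G absv (Some (typeI absv b)) y \<and> diamG absv y = r"
  then obtain N where N: "y = Some N" "N X \<le> 1" "\<And>f. typeI absv b f \<le> N f"
    using icx by (auto simp: on_path_G_def in_cdisc_def berk_le_def)
  have Nb: "is_berk_aff absv N" using y N(1) by (simp add: Berk_Some_iff)
  have eq: "N = zeta absv b (N [:-b, 1:])"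
    by (rule berk_aff_above_typeI_eq_zeta[OF Nb]) (use N(3) in \<open>simp add: typeI_def\<close>)
  have "rad N = r" using y N by (simp add: diamG_def)
  then have "N [:-b, 1:] = r" using rad_zeta[OF berk_aff_nonneg[OF Nb, of "[:-b, 1:]"], of b] eq by simp
  then show "y = Some (zeta absv b r)" using eq N(1) by simp
qed

lemma zeta_one_minus_smult_X_ge_1:
  assumes \<beta>: "absv \<beta> < 1" shows "1 \<le> zeta absv \<beta> 1 (1 - smult c X)"
proof (cases "c = 0")
  case True
  then show ?thesis by (simp add: one_pCons)
next
  case False
  have e: "zeta absv \<beta> 1 (1 - smult c X) = absv c * max (absv (\<beta> - inverse c)) 1"
    using one_minus_smult_X[OF False] zeta_smult_linear[of 1 \<beta> "-c" "inverse c"] by simp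
  show ?thesis
  proof (cases "absv c \<ge> 1")
    case True
    have "1 * 1 \<le> absv c * max (absv (\<beta> - inverse c)) 1" by (rule mult_mono) (use True in auto)
    then show ?thesis unfolding e by simp
  next
    case False
    have "absv c * absv \<beta> \<le> absv c * 1" by (rule mult_left_mono) (use \<beta> in auto)
    then have "absv (c * \<beta>) < 1" using False by (simp add: av_mult)
    then have "absv (1 - c * \<beta>) = 1" using av_diff_dominant[of "c * \<beta>" 1] by simp
    moreover have "c * (\<beta> - inverse c) = - (1 - c * \<beta>)" using \<open>c \<noteq> 0\<close> by (simp add: algebra_simps)
    ultimately have "absv c * absv (\<beta> - inverse c) = 1" by (metis av_mult av_uminus)
    moreover have "absv c * absv (\<beta> - inverse c) \<le> absv c * max (absv (\<beta> - inverse c)) 1"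
      by (rule mult_left_mono) auto
    ultimately show ?thesis unfolding e by simp
  qed
qed

lemma one_le_rad_inv_zeta_1:
  assumes \<beta>: "absv \<beta> < 1" shows "1 \<le> rad (rat_push 1 X (zeta absv \<beta> 1))"
  unfolding rad_def
proof (rule cINF_greatest)
  fix c
  have "zeta absv \<beta> 1 X = 1" using zeta_X[of 1 \<beta>] \<beta> by simp
  then show "1 \<le> rat_push 1 X (zeta absv \<beta> 1) [:- c, 1:]"
    using zeta_one_minus_smult_X_ge_1[OF \<beta>, of c] by (simp add: rat_push_inv_linear)
qed simp

lemma on_path_outside_eq_inv_zeta:
  assumes a: "\<not> in_cdisc a" "berk_inv absv a = Some (typeI absv \<beta>)" and \<beta>: "absv \<beta> < 1"
    and r: "0 < r" "r < 1"
    and y: "y \<in> Berk absv" "on_path_G absv a y" "diamG absv y = r"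
  shows "y = Some (rat_push 1 X (zeta absv \<beta> r))"
proof -
  have p: "in_cdisc (berk_inv absv y)" "berk_le (Some (typeI absv \<beta>)) (berk_inv absv y)"
    using a y(2) by (auto simp: on_path_G_def)
  obtain N where N: "y = Some N" using y(3) r by (cases y) (auto simp: diamG_def)
  have Nb: "is_berk_aff absv N" using y(1) N by (simp add: Berk_Some_iff)
  have NX: "N X \<noteq> 0" using p(1) N by (auto simp: berk_inv_Some_0 in_cdisc_def)
  define M where "M = rat_push 1 X N"
  have invN: "berk_inv absv y = Some M" using berk_inv_Some[of N, OF NX] N by (simp add: M_def)
  have Mb: "is_berk_aff absv M" using is_berk_aff_rat_push[OF Nb NX] by (simp add: M_def)
  define t where "t = M [:-\<beta>, 1:]"
  have t0: "t \<ge> 0" using berk_aff_nonneg[OF Mb] by (simp add: t_def)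
  have Meq: "M = zeta absv \<beta> t" unfolding t_def
    by (rule berk_aff_above_typeI_eq_zeta[OF Mb]) (use p(2) invN in \<open>simp add: berk_le_def typeI_def\<close>)
  have NM: "N = rat_push 1 X M" using rat_push_inv_involution[OF Nb NX] by (simp add: M_def)
  have MX: "M X = 1 / N X" "M X \<le> 1"
    using rat_push_inv_X[OF Nb] p(1) invN by (simp_all add: M_def in_cdisc_def)
  have "\<not> N X \<le> 1"
  proof
    assume "N X \<le> 1"
    moreover have "0 < N X" using berk_aff_nonneg[OF Nb, of X] NX by simp
    ultimately have "M X = 1" using MX by (simp add: le_divide_eq)
    then have "t = 1" using Meq zeta_X[OF t0, of \<beta>] \<beta> by (auto simp: max_def split: if_splits)
    then have "1 \<le> rad N" using one_le_rad_inv_zeta_1[OF \<beta>] NM Meq by simp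
    moreover have "rad N = r" using y(3) N \<open>N X \<le> 1\<close> by (simp add: diamG_def)
    ultimately show False using r by simp
  qed
  then have "rad M = r" using y(3) N invN by (simp add: diamG_def)
  then have "t = r" using rad_zeta[OF t0, of \<beta>] Meq by simp
  then show ?thesis using N NM Meq by simp
qed

lemma Qpt_outside_unit_disc:
  assumes a: "\<not> in_cdisc a" "berk_inv absv a = Some (typeI absv \<beta>)" and \<beta>: "absv \<beta> < 1"
    and r: "0 < r" "r < 1"
  shows "Qpt absv a r = Some (rat_push 1 X (zeta absv \<beta> r))"
  unfolding Qpt_def
proof (rule the_equality)
  have r0: "0 \<le> r" using r by simp
  define Z where "Z = zeta absv \<beta> r"
  have Zb: "is_berk_aff absv Z" using is_berk_aff_zeta[OF r0] by (simp add: Z_def)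
  have ZX: "Z X > 0" "Z X < 1" using zeta_X[OF r0] r \<beta> by (auto simp: Z_def)
  define W where "W = rat_push 1 X Z"
  have WX: "W X = 1 / Z X" using rat_push_inv_X[OF Zb] by (simp add: W_def)
  have invW: "berk_inv absv (Some W) = Some Z"
    using berk_inv_Some[of W] WX ZX rat_push_inv_involution[OF Zb] by (simp add: W_def)
  have ge: "\<And>f. typeI absv \<beta> f \<le> Z f" using av_poly_le_zeta[OF r0] by (simp add: Z_def typeI_def)
  have "Some W \<in> Berk absv" using is_berk_aff_rat_push[OF Zb] ZX by (simp add: W_def Berk_Some_iff)
  moreover have "on_path_G absv a (Some W)
      \<longleftrightarrow> in_cdisc (berk_inv absv (Some W)) \<and> berk_le (berk_inv absv a) (berk_inv absv (Some W))"
    using a(1) by (simp add: on_path_G_def)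
  then have "on_path_G absv a (Some W)" using invW a(2) ZX ge by (simp add: in_cdisc_def berk_le_def)
  moreover have "diamG absv (Some W) = r" using WX ZX invW rad_zeta[OF r0] by (simp add: diamG_def Z_def)
  ultimately show "Some (rat_push 1 X (zeta absv \<beta> r)) \<in> Berk absv
      \<and> on_path_G absv a (Some (rat_push 1 X (zeta absv \<beta> r)))
      \<and> diamG absv (Some (rat_push 1 X (zeta absv \<beta> r))) = r"
    by (simp add: W_def Z_def)
qed (use on_path_outside_eq_inv_zeta[OF a \<beta> r] in blast)

lemma not_on_path_outside_to_zeta:
  assumes x: "\<not> in_cdisc x" "berk_inv absv x = Some (typeI absv \<gamma>)" and \<gamma>: "absv \<gamma> < 1"
    and b: "absv b \<le> 1" and r: "0 < r" "r < 1"
  shows "\<not> on_path_G absv x (Some (zeta absv b r))"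
proof
  assume p: "on_path_G absv x (Some (zeta absv b r))"
  have r0: "0 \<le> r" using r by simp
  define Z where "Z = zeta absv b r"
  have Zb: "is_berk_aff absv Z" using is_berk_aff_zeta[OF r0] by (simp add: Z_def)
  have ZX: "Z X = max (absv b) r" using zeta_X[OF r0] by (simp add: Z_def)
  then have "Z X \<noteq> 0" using r by auto
  then have invZ: "berk_inv absv (Some Z) = Some (rat_push 1 X Z)" by (rule berk_inv_Some)
  have "in_cdisc (berk_inv absv (Some Z)) \<and> berk_le (berk_inv absv x) (berk_inv absv (Some Z))"
    using p x(1) by (simp add: on_path_G_def Z_def)
  then have pp: "rat_push 1 X Z X \<le> 1" "berk_le (Some (typeI absv \<gamma>)) (Some (rat_push 1 X Z))"
    using x(2) invZ by (simp_all add: in_cdisc_def)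
  then have "1 \<le> Z X" using rat_push_inv_X[OF Zb] ZX r by (simp add: divide_le_eq split: if_splits)
  then have b1: "absv b = 1" using ZX b r by (auto simp: max_def split: if_splits)
  then have "b \<noteq> 0" by auto
  have "rat_push 1 X Z [:- inverse b, 1:] = Z (1 - smult (inverse b) X) / Z X" by (rule rat_push_inv_linear)
  also have "\<dots> = Z (smult (- inverse b) [:- b, 1:])"
    using one_minus_smult_X[of "inverse b"] \<open>b \<noteq> 0\<close> ZX b1 r by simp
  also have "\<dots> = r" using zeta_smult_linear[OF r0, of b "- inverse b" b] b1 r
    by (simp add: Z_def av_inverse)
  finally have "absv (poly [:- inverse b, 1:] \<gamma>) \<le> r"
    using pp(2) unfolding berk_le_def typeI_def by (metis option.inject)
  then have "absv (inverse b - \<gamma>) \<le> r" by (simp add: av_minus_commute)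
  moreover have "absv (inverse b - \<gamma>) = 1"
    using av_diff_dominant[of \<gamma> "inverse b"] \<gamma> b1 by (simp add: av_inverse)
  ultimately show False using r by simp
qed

lemma ball_minus_typeI_in_unit_disc:
  assumes b: "absv b \<le> 1" and r: "0 < r" "r < 1" and x: "x \<in> ball_minus absv (Some (typeI absv b)) r"
  shows "x \<noteq> None" and "x = Some (typeI absv \<gamma>) \<Longrightarrow> absv (\<gamma> - b) \<le> r"
proof -
  have r0: "0 \<le> r" using r by simp
  have p: "on_path_G absv x (Some (zeta absv b r))"
    using x r Qpt_typeI_in_unit_disc[OF b r] by (simp add: ball_minus_def)
  show "x \<noteq> None"
  proof
    assume "x = None"
    then have "\<not> in_cdisc x" "berk_inv absv x = Some (typeI absv 0)" by (simp_all add: in_cdisc_def berk_inv_None)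
    then show False using not_on_path_outside_to_zeta[OF _ _ _ b r] p by simp
  qed
  assume x\<gamma>: "x = Some (typeI absv \<gamma>)"
  have "in_cdisc x"
  proof (rule ccontr)
    assume "\<not> in_cdisc x"
    then have "absv \<gamma> > 1" "\<gamma> \<noteq> 0" using x\<gamma> by (auto simp: in_cdisc_def typeI_X)
    then show False using not_on_path_outside_to_zeta[OF \<open>\<not> in_cdisc x\<close> _ _ b r] p x\<gamma>
      by (simp add: berk_inv_typeI av_inverse inverse_less_1_iff)
  qed
  then have "typeI absv \<gamma> [:-b, 1:] \<le> zeta absv b r [:-b, 1:]"
    using p x\<gamma> by (simp add: on_path_G_def berk_le_def)
  then show "absv (\<gamma> - b) \<le> r" using zeta_linear[OF r0, of b b] r by (simp add: typeI_def av_minus_commute)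
qed

lemma ball_minus_outside_unit_disc:
  assumes a: "\<not> in_cdisc a" "berk_inv absv a = Some (typeI absv \<beta>)" and \<beta>: "absv \<beta> < 1"
    and r: "0 < r" "r < 1" and x: "x \<in> ball_minus absv a r"
  shows "x = Some (typeI absv \<gamma>) \<Longrightarrow> \<gamma> \<noteq> 0 \<and> absv (inverse \<gamma> - \<beta>) \<le> r"
    and "x = None \<Longrightarrow> absv \<beta> \<le> r"
proof -
  have r0: "0 \<le> r" using r by simp
  define Z where "Z = zeta absv \<beta> r"
  have Zb: "is_berk_aff absv Z" using is_berk_aff_zeta[OF r0] by (simp add: Z_def)
  have ZX: "Z X > 0" "Z X < 1" using zeta_X[OF r0] r \<beta> by (auto simp: Z_def)
  define W where "W = rat_push 1 X Z"
  have WX: "W X = 1 / Z X" using rat_push_inv_X[OF Zb] by (simp add: W_def)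
  have invW: "berk_inv absv (Some W) = Some Z"
    using berk_inv_Some[of W] WX ZX rat_push_inv_involution[OF Zb] by (simp add: W_def)
  have p: "on_path_G absv x (Some W)"
    using x r Qpt_outside_unit_disc[OF a \<beta> r] by (simp add: ball_minus_def W_def Z_def)
  have "\<not> in_cdisc (Some W)" using WX ZX by (simp add: in_cdisc_def)
  then have nx: "\<not> in_cdisc x" using p by (auto simp: on_path_G_def)
  have le: "berk_le (berk_inv absv x) (Some Z)" using p nx invW by (simp add: on_path_G_def)
  have Zlin: "Z [:-\<beta>, 1:] = r" using zeta_linear[OF r0, of \<beta> \<beta>] r by (simp add: Z_def)
  show "\<gamma> \<noteq> 0 \<and> absv (inverse \<gamma> - \<beta>) \<le> r" if x\<gamma>: "x = Some (typeI absv \<gamma>)"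
  proof -
    have "\<gamma> \<noteq> 0" using nx x\<gamma> by (auto simp: in_cdisc_def typeI_X)
    then have "typeI absv (inverse \<gamma>) [:-\<beta>, 1:] \<le> Z [:-\<beta>, 1:]"
      using le x\<gamma> berk_inv_typeI by (simp add: berk_le_def)
    then show ?thesis using \<open>\<gamma> \<noteq> 0\<close> Zlin by (simp add: typeI_def av_minus_commute)
  qed
  show "absv \<beta> \<le> r" if "x = None"
  proof -
    have "typeI absv 0 [:-\<beta>, 1:] \<le> Z [:-\<beta>, 1:]" using le that by (simp add: berk_le_def berk_inv_None)
    then show ?thesis using Zlin by (simp add: typeI_def)
  qed
qed

lemma P1K_cases:
  assumes "a \<in> P1K absv"
  obtains (in_disc) b where "a = Some (typeI absv b)" "absv b \<le> 1"
    | (outside) \<beta> where "\<not> in_cdisc a" "berk_inv absv a = Some (typeI absv \<beta>)" "absv \<beta> < 1"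
proof (cases a)
  case None
  then show ?thesis using outside[of 0] by (simp add: in_cdisc_def berk_inv_None)
next
  case (Some N)
  then obtain b where b: "a = Some (typeI absv b)" using assms by (auto simp: P1K_def)
  show ?thesis
  proof (cases "absv b \<le> 1")
    case False
    then have "b \<noteq> 0" by auto
    then show ?thesis using outside[of "inverse b"] b False berk_inv_typeI
      by (simp add: in_cdisc_def typeI_X av_inverse inverse_less_1_iff)
  qed (use in_disc b in blast)
qed

definition disc_separated :: "real \<Rightarrow> 'a set \<Rightarrow> 'a set \<Rightarrow> bool" where
  "disc_separated r U V \<longleftrightarrow> (\<forall>u\<in>U. \<forall>v\<in>V. \<forall>b. \<not> (absv (u - b) \<le> r \<and> absv (v - b) \<le> r))"

lemma disc_separated_mono: "disc_separated r U V \<Longrightarrow> s \<le> r \<Longrightarrow> disc_separated s U V"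
  unfolding disc_separated_def by (meson order_trans)

lemma exists_separating_radius:
  assumes "finite U" "finite V" "U \<inter> V = {}"
  shows "\<exists>r>0. r < 1 \<and> disc_separated r U V"
proof -
  define D where "D = (\<lambda>(u, v). absv (u - v)) ` (U \<times> V)"
  have "finite D" using assms by (simp add: D_def)
  have D_pos: "t > 0" if "t \<in> D" for t using that assms(3) by (auto simp: D_def intro!: av_pos)
  define \<delta> where "\<delta> = Min (insert 1 D)"
  have \<delta>: "\<delta> > 0" "\<delta> \<le> 1" using \<open>finite D\<close> D_pos by (auto simp: \<delta>_def)
  have far: "\<delta> \<le> absv (u - v)" if "u \<in> U" "v \<in> V" for u v
    using that \<open>finite D\<close> unfolding \<delta>_def D_def by (intro Min_le) (auto intro!: image_eqI[of _ _ "(u, v)"])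
  have "\<not> (absv (u - b) \<le> \<delta> / 2 \<and> absv (v - b) \<le> \<delta> / 2)" if "u \<in> U" "v \<in> V" for u v b
  proof
    assume "absv (u - b) \<le> \<delta> / 2 \<and> absv (v - b) \<le> \<delta> / 2"
    moreover have "absv (u - v) \<le> max (absv (u - b)) (absv (v - b))"
      using av_diff[of "u - b" "v - b"] by simp
    ultimately show False using far[OF that] \<delta> by linarith
  qed
  then show ?thesis using \<delta> unfolding disc_separated_def by (intro exI[of _ "\<delta> / 2"]) auto
qed

lemma image_ne_Berk_if_separated:
  assumes poles: "\<And>x. x \<in> A \<Longrightarrow> \<Phi> x = None \<Longrightarrow> \<exists>v\<in>V. absv (v - b) \<le> r"
    and zeros: "\<And>x. x \<in> A \<Longrightarrow> \<Phi> x = Some (typeI absv 0) \<Longrightarrow> \<exists>u\<in>U. absv (u - b) \<le> r"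
    and sep: "disc_separated r U V"
  shows "\<Phi> ` A \<noteq> Berk absv"
proof
  assume "\<Phi> ` A = Berk absv"
  moreover have "None \<in> Berk absv" by (simp add: Berk_def)
  ultimately obtain x0 where "x0 \<in> A" "\<Phi> x0 = None" by (metis imageE)
  moreover obtain x1 where "x1 \<in> A" "\<Phi> x1 = Some (typeI absv 0)"
    using \<open>\<Phi> ` A = Berk absv\<close> typeI_in_Berk by (metis imageE)
  ultimately show False using poles zeros sep unfolding disc_separated_def by blast
qed

lemma rat_berk_eq_None:
  assumes Q0: "Q \<noteq> 0" and x: "x \<in> Berk absv" "rat_berk absv P Q x = None"
  shows "(x = None \<and> degree Q < degree P) \<or> (\<exists>g. poly Q g = 0 \<and> x = Some (typeI absv g))"
proof (cases x)
  case None
  then show ?thesis using x by (simp add: rat_berk_def split: if_splits)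
next
  case (Some N)
  then have "is_berk_aff absv N" "N Q = 0" using x by (simp_all add: Berk_Some_iff rat_berk_def split: if_splits)
  then show ?thesis using berk_aff_eq_typeI_of_zero[OF _ Q0] Some by auto
qed

lemma rat_berk_eq_0:
  assumes Q0: "Q \<noteq> 0" and P0: "P \<noteq> 0" and x: "x \<in> Berk absv" "rat_berk absv P Q x = Some (typeI absv 0)"
  shows "(x = None \<and> degree P < degree Q) \<or> (\<exists>g. poly P g = 0 \<and> x = Some (typeI absv g))"
proof (cases x)
  case None
  then have "degree P \<le> degree Q" "typeI absv (coeff P (degree Q) / lead_coeff Q) = typeI absv 0"
    using x by (simp_all add: rat_berk_def split: if_splits)
  moreover from this(2) have "coeff P (degree Q) = 0" using typeI_inj Q0 by fastforce
  then have "degree P \<noteq> degree Q" using P0 by (metis leading_coeff_0_iff)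
  ultimately show ?thesis using None by simp
next
  case (Some N)
  have Nb: "is_berk_aff absv N" and NQ: "N Q \<noteq> 0"
    using x Some by (auto simp: Berk_Some_iff rat_berk_def split: if_splits)
  then have "rat_push P Q N = typeI absv 0" using x Some rat_berk_Some[of N Q, OF NQ] by simp
  then have "rat_push P Q N X = 0" by (simp add: typeI_def)
  then have "N P = 0" using NQ by (simp add: rat_push_def subst_rat_X)
  then show ?thesis using berk_aff_eq_typeI_of_zero[OF Nb P0] Some by auto
qed

text \<open>The zeros of \<open>F/G\<close> in the coordinate \<open>1/z\<close>: inverses of the nonzero roots of \<open>F\<close>,
  and \<open>0\<close> (the point \<open>\<infinity>\<close>) iff \<open>degree F < degree G\<close>.\<close>
definition roots_at_infinity :: "'a poly \<Rightarrow> 'a poly \<Rightarrow> 'a set" where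
  "roots_at_infinity F G = inverse ` {g. poly F g = 0 \<and> g \<noteq> 0} \<union> (if degree F < degree G then {0} else {})"

lemma finite_roots_at_infinity: "F \<noteq> 0 \<Longrightarrow> finite (roots_at_infinity F G)"
  unfolding roots_at_infinity_def by (auto intro: finite_subset[OF _ poly_roots_finite])

lemma coprime_no_common_root:
  fixes P Q :: "'a poly"
  assumes "coprime P Q" "poly P g = 0" "poly Q g = 0" shows False
proof -
  have "[:-g, 1:] dvd P" "[:-g, 1:] dvd Q" using assms by (simp_all add: poly_eq_0_iff_dvd)
  then have "is_unit [:-g, 1:]" using assms(1) by (rule coprime_common_divisor[rotated])
  then show False by (simp add: is_unit_iff_degree)
qed

lemma roots_at_infinity_disjoint:
  "coprime P Q \<Longrightarrow> roots_at_infinity P Q \<inter> roots_at_infinity Q P = {}"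
  by (auto simp: roots_at_infinity_def dest: coprime_no_common_root)

lemma rat_berk_image_ball_minus_ne_Berk:
  fixes P Q :: "'a poly"
  assumes Q0: "Q \<noteq> 0" and P0: "P \<noteq> 0" and r: "0 < r" "r < 1"
    and sep_finite: "disc_separated r {g. poly P g = 0} {g. poly Q g = 0}"
    and sep_infinite: "disc_separated r (roots_at_infinity P Q) (roots_at_infinity Q P)"
    and a: "a \<in> P1K absv"
  shows "rat_berk absv P Q ` ball_minus absv a r \<noteq> Berk absv"
proof -
  have inB: "x \<in> Berk absv" if "x \<in> ball_minus absv a r" for x using that r by (simp add: ball_minus_def)
  from a show ?thesis
  proof (cases rule: P1K_cases)
    case (in_disc b)
    note ball = ball_minus_typeI_in_unit_disc[OF in_disc(2) r, folded in_disc(1)]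
    show ?thesis
    proof (rule image_ne_Berk_if_separated[OF _ _ sep_finite])
      show "\<exists>v\<in>{g. poly Q g = 0}. absv (v - b) \<le> r" if "x \<in> ball_minus absv a r" "rat_berk absv P Q x = None" for x
        using rat_berk_eq_None[OF Q0 inB that(2)] ball[OF that(1)] that by blast
      show "\<exists>u\<in>{g. poly P g = 0}. absv (u - b) \<le> r"
        if "x \<in> ball_minus absv a r" "rat_berk absv P Q x = Some (typeI absv 0)" for x
        using rat_berk_eq_0[OF Q0 P0 inB that(2)] ball[OF that(1)] that by blast
    qed
  next
    case (outside \<beta>)
    note ball = ball_minus_outside_unit_disc[OF outside r]
    show ?thesis
    proof (rule image_ne_Berk_if_separated[OF _ _ sep_infinite])
      show "\<exists>v\<in>roots_at_infinity Q P. absv (v - \<beta>) \<le> r"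
        if "x \<in> ball_minus absv a r" "rat_berk absv P Q x = None" for x
        using rat_berk_eq_None[OF Q0 inB that(2)] ball[OF that(1)] that
        by (force simp: roots_at_infinity_def)
      show "\<exists>u\<in>roots_at_infinity P Q. absv (u - \<beta>) \<le> r"
        if "x \<in> ball_minus absv a r" "rat_berk absv P Q x = Some (typeI absv 0)" for x
        using rat_berk_eq_0[OF Q0 P0 inB that(2)] ball[OF that(1)] that
        by (force simp: roots_at_infinity_def)
    qed
  qed
qed

lemma B0_le_1:
  fixes P Q :: "'a poly"
  assumes Q0: "Q \<noteq> 0" and P0: "P \<noteq> 0" and cop: "coprime P Q"
  shows "B0 absv (rat_berk absv P Q) \<le> 1"
proof -
  have "{g. poly P g = 0} \<inter> {g. poly Q g = 0} = {}" using coprime_no_common_root[OF cop] by auto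
  then obtain r1 where r1: "0 < r1" "r1 < 1" "disc_separated r1 {g. poly P g = 0} {g. poly Q g = 0}"
    using exists_separating_radius poly_roots_finite[OF P0] poly_roots_finite[OF Q0] by meson
  obtain r2 where r2: "0 < r2" "r2 < 1" "disc_separated r2 (roots_at_infinity P Q) (roots_at_infinity Q P)"
    using exists_separating_radius[OF finite_roots_at_infinity[OF P0] finite_roots_at_infinity[OF Q0]
        roots_at_infinity_disjoint[OF cop]] by blast
  define r where "r = min r1 r2"
  have r: "0 < r" "r < 1" using r1 r2 by (auto simp: r_def)
  have "\<forall>a\<in>P1K absv. rat_berk absv P Q ` ball_minus absv a r \<noteq> Berk absv"
    using rat_berk_image_ball_minus_ne_Berk[OF Q0 P0 r] disc_separated_mono r1(3) r2(3) by (simp add: r_def)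
  then have "Sup {r. 0 < r \<and> r \<le> 1 \<and> (\<forall>a\<in>P1K absv. rat_berk absv P Q ` ball_minus absv a r \<noteq> Berk absv)} \<le> 1"
    using r by (intro cSup_least) (auto intro!: exI[of _ r])
  then show ?thesis by (simp add: B0_def)
qed

section \<open>The Lipschitz estimate\<close>

lemma joinG_commute: "joinG absv x y = joinG absv y x"
  unfolding joinG_def by (metis (no_types, opaque_lifting))

lemma berk_dist_commute: "berk_dist absv x y = berk_dist absv y x"
  by (simp add: berk_dist_def joinG_commute)

lemma joinG_of_le:
  assumes "Some M \<in> Berk absv" and "N X \<le> 1" "M X \<le> 1" and le: "\<And>f. N f \<le> M f"
  shows "joinG absv (Some N) (Some M) = Some M"
  unfolding joinG_def
proof (rule the_equality)
  have cdisc: "in_cdisc (Some N)" "in_cdisc (Some M)" using assms by (auto simp: in_cdisc_def)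
  then have "on_path_G absv (Some N) (Some M)" "on_path_G absv (Some M) (Some M)"
    using le by (simp_all add: on_path_G_def berk_le_def)
  then show "Some M \<in> Berk absv \<and> on_path_G absv (Some N) (Some M) \<and> on_path_G absv (Some M) (Some M) \<and>
      (\<forall>w\<in>Berk absv. on_path_G absv (Some N) w \<and> on_path_G absv (Some M) w \<longrightarrow> on_path_G absv (Some M) w)"
    using assms(1) by blast
  fix z assume z: "z \<in> Berk absv \<and> on_path_G absv (Some N) z \<and> on_path_G absv (Some M) z \<and>
      (\<forall>w\<in>Berk absv. on_path_G absv (Some N) w \<and> on_path_G absv (Some M) w \<longrightarrow> on_path_G absv z w)"
  then have "on_path_G absv z (Some M)" using assms(1) \<open>on_path_G absv (Some N) (Some M)\<close>
      \<open>on_path_G absv (Some M) (Some M)\<close> by blast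
  moreover have "in_cdisc z" "berk_le (Some M) z" using z cdisc by (auto simp: on_path_G_def)
  ultimately have "berk_le z (Some M)" by (simp add: on_path_G_def)
  with \<open>berk_le (Some M) z\<close> show "z = Some M" by (auto simp: berk_le_def intro!: ext antisym)
qed

lemma diamG_in_unit_disc: "N X \<le> 1 \<Longrightarrow> diamG absv (Some N) = rad N"
  by (simp add: diamG_def)

lemma berk_dist_of_le:
  assumes "Some M \<in> Berk absv" and "N X \<le> 1" "M X \<le> 1" and "\<And>f. N f \<le> M f"
  shows "berk_dist absv (Some N) (Some M) = rad M - rad N"
  using joinG_of_le[OF assms] assms(2,3) by (simp add: berk_dist_def diamG_in_unit_disc)

lemma Lip_Berk_le:
  assumes "\<And>x y. x \<in> S \<Longrightarrow> y \<in> S \<Longrightarrow> x \<noteq> y \<Longrightarrow>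
      berk_dist absv (\<Phi> x) (\<Phi> y) / berk_dist absv x y \<le> L"
  shows "Lip_Berk absv \<Phi> S \<le> ereal L"
  unfolding Lip_Berk_def by (rule SUP_least) (use assms in auto)

lemma rat_push_gauss_in_unit_disc:
  assumes r: "0 \<le> r" and Q0: "poly Q 0 \<noteq> 0" and gQ: "gauss r Q = absv (poly Q 0)"
    and gP: "gauss r P \<le> absv (poly Q 0)"
  shows "is_berk_aff absv (rat_push P Q (gauss r))" and "rat_push P Q (gauss r) X \<le> 1"
    and "rad (rat_push P Q (gauss r)) = gauss r (P - smult (poly P 0 / poly Q 0) Q) / absv (poly Q 0)"
proof -
  have q: "absv (poly Q 0) > 0" using Q0 by (simp add: av_pos)
  show "is_berk_aff absv (rat_push P Q (gauss r))"
    using is_berk_aff_rat_push[of "gauss r" Q P] is_berk_aff_zeta[OF r, of 0] gQ Q0 by (simp add: zeta_0_eq_gauss)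
  show "rat_push P Q (gauss r) X \<le> 1" using gP gQ q by (simp add: rat_push_def subst_rat_X)
  have lin: "rat_push P Q (gauss r) [:-a, 1:] = gauss r (P - smult a Q) / absv (poly Q 0)" for a
    using gQ by (simp add: rat_push_def subst_rat_linear)
  show "rad (rat_push P Q (gauss r)) = gauss r (P - smult (poly P 0 / poly Q 0) Q) / absv (poly Q 0)"
    unfolding rad_def
  proof (rule cInf_eq_minimum)
    show "gauss r (P - smult (poly P 0 / poly Q 0) Q) / absv (poly Q 0) \<in> range (\<lambda>a. rat_push P Q (gauss r) [:- a, 1:])"
      unfolding lin by (rule rangeI)
    fix x assume "x \<in> range (\<lambda>a. rat_push P Q (gauss r) [:- a, 1:])"
    then show "gauss r (P - smult (poly P 0 / poly Q 0) Q) / absv (poly Q 0) \<le> x"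
      using lin gauss_diff_smult_min[OF r Q0 gQ] q by (auto intro: divide_right_mono)
  qed
qed

lemma berk_dist_rat_push_gauss:
  assumes rs: "0 \<le> r" "r \<le> s" and Q0: "poly Q 0 \<noteq> 0"
    and gQ: "gauss r Q = absv (poly Q 0)" "gauss s Q = absv (poly Q 0)"
    and gP: "gauss r P \<le> absv (poly Q 0)" "gauss s P \<le> absv (poly Q 0)"
  shows "berk_dist absv (Some (rat_push P Q (gauss r))) (Some (rat_push P Q (gauss s)))
       = (gauss s (P - smult (poly P 0 / poly Q 0) Q) - gauss r (P - smult (poly P 0 / poly Q 0) Q))
         / absv (poly Q 0)"
proof -
  have s: "0 \<le> s" using rs by simp
  have "rat_push P Q (gauss r) f \<le> rat_push P Q (gauss s) f" for f
    using gauss_mono[OF rs] gQ by (simp add: rat_push_def divide_right_mono)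
  then show ?thesis
    using berk_dist_of_le[of "rat_push P Q (gauss s)" "rat_push P Q (gauss r)"]
      rat_push_gauss_in_unit_disc[OF rs(1) Q0 gQ(1) gP(1)] rat_push_gauss_in_unit_disc[OF s Q0 gQ(2) gP(2)]
    by (simp add: Berk_Some_iff diff_divide_distrib)
qed

lemma berk_dist_zeta_0:
  assumes "0 \<le> r" "r \<le> s" "s \<le> 1"
  shows "berk_dist absv (Some (zeta absv 0 r)) (Some (zeta absv 0 s)) = s - r"
  using berk_dist_of_le[of "zeta absv 0 s" "zeta absv 0 r"] is_berk_aff_zeta[of s 0] zeta_mono[of r s 0] assms
  by (simp add: Berk_Some_iff zeta_X rad_zeta)

lemma gauss_le_of_maps_into_disc:
  assumes B: "0 < B" and no_poles: "\<And>z. absv z < B \<Longrightarrow> poly Q z \<noteq> 0"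
    and bounded: "\<And>z. absv z < B \<Longrightarrow> absv (poly P z / poly Q z - poly P 0 / poly Q 0) \<le> 1"
  shows "gauss B (P - smult (poly P 0 / poly Q 0) Q) \<le> absv (poly Q 0)"
proof (rule gauss_le_of_av_poly_le[OF B])
  fix z assume z: "absv z < B"
  have "absv (poly Q z) = absv (poly Q 0)"
    using av_poly_eq_av_poly_0 no_poles z by (meson le_less_trans not_le)
  moreover have "poly (P - smult (poly P 0 / poly Q 0) Q) z = poly Q z * (poly P z / poly Q z - poly P 0 / poly Q 0)"
    using no_poles[OF z] by (simp add: field_simps)
  ultimately show "absv (poly (P - smult (poly P 0 / poly Q 0) Q) z) \<le> absv (poly Q 0)"
    using bounded[OF z] by (simp add: av_mult mult_left_le)
qed

lemma gauss_le_of_diff_smult_le: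
  assumes r: "0 \<le> r" and g: "gauss r (P - smult c Q) \<le> q" and gQ: "gauss r Q = q" and c: "absv c \<le> 1"
  shows "gauss r P \<le> q"
proof -
  have "gauss r P \<le> max (gauss r (P - smult c Q)) (gauss r (smult c Q))"
    using gauss_add[OF r, of "P - smult c Q" "smult c Q"] by simp
  moreover have "gauss r (smult c Q) \<le> q"
    using gQ c gauss_nonneg[of r Q] by (simp add: gauss_smult[OF r] mult_left_le_one_le)
  ultimately show ?thesis using g by linarith
qed

lemma Lip_Berk_zeta_segment_le:
  assumes "\<And>r s. 0 \<le> r \<Longrightarrow> r < s \<Longrightarrow> s \<le> B \<Longrightarrow>
      berk_dist absv (\<Phi> (Some (zeta absv 0 r))) (\<Phi> (Some (zeta absv 0 s)))
      / berk_dist absv (Some (zeta absv 0 r)) (Some (zeta absv 0 s)) \<le> L"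
  shows "Lip_Berk absv \<Phi> {Some (zeta absv 0 r) | r. 0 \<le> r \<and> r \<le> B} \<le> ereal L"
proof (rule Lip_Berk_le)
  fix x y assume "x \<in> {Some (zeta absv 0 r) | r. 0 \<le> r \<and> r \<le> B}" "y \<in> {Some (zeta absv 0 r) | r. 0 \<le> r \<and> r \<le> B}"
    and "x \<noteq> y"
  then obtain r s where xy: "x = Some (zeta absv 0 r)" "y = Some (zeta absv 0 s)" "0 \<le> r" "r \<le> B"
    "0 \<le> s" "s \<le> B" "r \<noteq> s" by auto
  then consider "r < s" | "s < r" by linarith
  then show "berk_dist absv (\<Phi> x) (\<Phi> y) / berk_dist absv x y \<le> L"
    by cases (use xy assms berk_dist_commute in \<open>metis\<close>)+
qed

lemma Lip_Berk_rat_berk_segment_le: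
  fixes P Q :: "'a poly"
  assumes B: "0 < B" "B \<le> 1"
    and no_poles: "\<And>z. absv z < B \<Longrightarrow> poly Q z \<noteq> 0"
    and bounded: "\<And>z. absv z < B \<Longrightarrow> absv (poly P z / poly Q z - poly P 0 / poly Q 0) \<le> 1"
    and c0: "absv (poly P 0 / poly Q 0) \<le> 1" and d: "degree P \<le> d" "degree Q \<le> d"
  shows "Lip_Berk absv (rat_berk absv P Q) {Some (zeta absv 0 r) | r. 0 \<le> r \<and> r \<le> B}
           \<le> ereal (real d / B)"
proof -
  define q where "q = absv (poly Q 0)"
  define c where "c = poly P 0 / poly Q 0"
  define g where "g = P - smult c Q"
  have Q0: "poly Q 0 \<noteq> 0" using no_poles B by simp
  then have q: "q > 0" by (simp add: q_def av_pos)
  have gQ: "gauss r Q = q" if "0 \<le> r" "r \<le> B" for r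
    using gauss_eq_av_poly_0[OF that(1)] no_poles that(2) by (force simp: q_def)
  have gB: "gauss B g \<le> q" using gauss_le_of_maps_into_disc[OF B(1) no_poles bounded] by (simp add: g_def c_def q_def)
  have gP: "gauss r P \<le> q" if "0 \<le> r" "r \<le> B" for r
    using gauss_le_of_diff_smult_le[OF that(1) _ gQ[OF that] c0[folded c_def]] gauss_mono[OF that, of g] gB
    by (simp add: g_def)
  have slope: "gauss s g - gauss r g \<le> real d * q / B * (s - r)" if "0 \<le> r" "r \<le> s" "s \<le> B" for r s
  proof -
    have "degree g \<le> d"
      using d degree_diff_le_max[of P "smult c Q"] degree_smult_le[of c Q] unfolding g_def by linarith
    then have "real (degree g) * q / B * (s - r) \<le> real d * q / B * (s - r)"
      using q B that by (intro mult_right_mono divide_right_mono) auto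
    moreover have "coeff g 0 = 0" using Q0 by (simp add: g_def c_def poly_0_coeff_0[symmetric])
    ultimately show ?thesis using gauss_diff_le_slope[OF _ B(1) gB that] by simp
  qed
  have ratio: "berk_dist absv (rat_berk absv P Q (Some (zeta absv 0 r))) (rat_berk absv P Q (Some (zeta absv 0 s)))
      / berk_dist absv (Some (zeta absv 0 r)) (Some (zeta absv 0 s)) \<le> real d / B"
    if rs: "0 \<le> r" "r < s" "s \<le> B" for r s
  proof -
    have image: "rat_berk absv P Q (Some (zeta absv 0 t)) = Some (rat_push P Q (gauss t))" if "0 \<le> t" "t \<le> B" for t
      using rat_berk_Some[of "gauss t" Q P] gQ[OF that] q by (simp add: zeta_0_eq_gauss)
    have "(gauss s g - gauss r g) / q \<le> real d * q / B * (s - r) / q"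
      using slope[of r s] rs q by (intro divide_right_mono) auto
    also have "\<dots> = real d / B * (s - r)" using q by simp
    finally have "(gauss s g - gauss r g) / q \<le> real d / B * (s - r)" .
    then have "(gauss s g - gauss r g) / q / (s - r) \<le> real d / B"
      using rs by (subst pos_divide_le_eq) auto
    then show ?thesis
      using berk_dist_rat_push_gauss[of r s, OF _ _ Q0] berk_dist_zeta_0[of r s] image rs B gQ gP
      by (simp add: q_def g_def c_def)
  qed
  show ?thesis by (rule Lip_Berk_zeta_segment_le) (rule ratio)
qed

end

theorem proposition5p2:
  fixes absv :: "'a::field \<Rightarrow> real" and P Q :: "'a poly" and d :: nat and R :: real
  assumes K: "nonarch_cac_field absv"
    and Q0: "Q \<noteq> 0" and cop: "coprime P Q"
    and d: "d = max (degree P) (degree Q)" and d1: "d \<ge> 1"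
    and nopoles: "\<forall>z. absv z < B0 absv (rat_berk absv P Q) \<longrightarrow> poly Q z \<noteq> 0"
    and R: "R > 0"
    and img: "(\<lambda>z. poly P z / poly Q z) ` {z. absv z < B0 absv (rat_berk absv P Q)}
              = {w. absv (w - poly P 0 / poly Q 0) < R}"
    and c0: "absv (poly P 0 / poly Q 0) \<le> 1" and R1: "R \<le> 1"
  shows "Lip_Berk absv (rat_berk absv P Q)
           {Some (zeta absv 0 r) | r. 0 \<le> r \<and> r \<le> B0 absv (rat_berk absv P Q)}
         \<le> ereal (real d / B0 absv (rat_berk absv P Q))"
proof -
  interpret nonarch_field absv by unfold_locales (rule K)
  define B where "B = B0 absv (rat_berk absv P Q)"
  have "P \<noteq> 0"
  proof
    assume "P = 0"
    then have "degree Q = 0" using cop Q0 by (simp add: is_unit_iff_degree)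
    then show False using d d1 \<open>P = 0\<close> by simp
  qed
  then have B1: "B \<le> 1" using B0_le_1[OF Q0 _ cop] by (simp add: B_def)
  note img = img[folded B_def]
  have "poly P 0 / poly Q 0 \<in> (\<lambda>z. poly P z / poly Q z) ` {z. absv z < B}" unfolding img using R by simp
  then obtain z where "absv z < B" by blast
  then have B_pos: "0 < B" using av_nonneg[of z] by linarith
  have "absv (poly P z / poly Q z - poly P 0 / poly Q 0) \<le> 1" if "absv z < B" for z
  proof -
    have "poly P z / poly Q z \<in> {w. absv (w - poly P 0 / poly Q 0) < R}"
      unfolding img[symmetric] using that by blast
    then show ?thesis using R1 by simp
  qed
  then show ?thesis using Lip_Berk_rat_berk_segment_le[OF B_pos B1] nopoles c0 d by (simp add: B_def)
qed

end
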